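(* Let $N\ge1$, let $F:\mathbb R\to\mathbb R$ be a continuous even function, and $J(u)=\int_{\mathbb R^N}\frac12|\nabla u|^2+F(u)\,dx$ for $u\in H^1(\mathbb R^N)$. Suppose that for every $\rho>0$ the minimum $I_{\rho^2}:=\min\{J(u):u\in H^1(\mathbb R^N),\ \|u\|_{L^2}^2=\rho^2\}$ exists (is attained). Then for every $\rho>0$ and every $\mu\in(0,\rho)$, $$I_{\rho^2}<I_{\mu^2}+I_{\rho^2-\mu^2}.$$
   Context: Here $I_{\rho^2-\mu^2}$ denotes the minimum of $J$ over functions with squared $L^2$-norm equal to $\rho^2-\mu^2$. *)

theory Defs
  imports "HOL-Analysis.Analysis"
begin

text \<open>Functions on R^N are modelled as functions on an arbitrary Euclidean space 'a,
  with N = DIM('a) (always at least 1), integrated against Lebesgue measure.\<close>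

fun iter_deriv :: "'a::euclidean_space list \<Rightarrow> ('a \<Rightarrow> real) \<Rightarrow> ('a \<Rightarrow> real)" where
  "iter_deriv [] f = f"
| "iter_deriv (d # ds) f = (\<lambda>x. frechet_derivative (iter_deriv ds f) (at x) d)"

definition smooth_fun :: "('a::euclidean_space \<Rightarrow> real) \<Rightarrow> bool" where
  "smooth_fun f \<longleftrightarrow> (\<forall>ds x. iter_deriv ds f differentiable (at x))"

definition test_fun :: "('a::euclidean_space \<Rightarrow> real) \<Rightarrow> bool" where
  "test_fun \<phi> \<longleftrightarrow> smooth_fun \<phi> \<and> compact (closure {x. \<phi> x \<noteq> 0})"

definition L2 :: "('a::euclidean_space \<Rightarrow> real) \<Rightarrow> bool" where
  "L2 f \<longleftrightarrow> f \<in> borel_measurable lebesgue \<and> integrable lebesgue (\<lambda>x. (f x)\<^sup>2)"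

definition weak_partial :: "('a::euclidean_space \<Rightarrow> real) \<Rightarrow> 'a \<Rightarrow> ('a \<Rightarrow> real) \<Rightarrow> bool" where
  "weak_partial u b g \<longleftrightarrow>
     (\<forall>\<phi>. test_fun \<phi> \<longrightarrow>
        (\<integral>x. u x * frechet_derivative \<phi> (at x) b \<partial>lebesgue) = - (\<integral>x. g x * \<phi> x \<partial>lebesgue))"

definition H1 :: "('a::euclidean_space \<Rightarrow> real) \<Rightarrow> bool" where
  "H1 u \<longleftrightarrow> L2 u \<and> (\<forall>b\<in>Basis. \<exists>g. L2 g \<and> weak_partial u b g)"

definition weak_grad :: "('a::euclidean_space \<Rightarrow> real) \<Rightarrow> 'a \<Rightarrow> ('a \<Rightarrow> real)" where
  "weak_grad u b = (SOME g. L2 g \<and> weak_partial u b g)"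

definition grad_sq :: "('a::euclidean_space \<Rightarrow> real) \<Rightarrow> 'a \<Rightarrow> real" where
  "grad_sq u x = (\<Sum>b\<in>Basis. (weak_grad u b x)\<^sup>2)"

definition L2_norm_sq :: "('a::euclidean_space \<Rightarrow> real) \<Rightarrow> real" where
  "L2_norm_sq u = (\<integral>x. (u x)\<^sup>2 \<partial>lebesgue)"

definition J :: "(real \<Rightarrow> real) \<Rightarrow> ('a::euclidean_space \<Rightarrow> real) \<Rightarrow> real" where
  "J F u = (\<integral>x. (1/2) * grad_sq u x + F (u x) \<partial>lebesgue)"

definition mass_set :: "real \<Rightarrow> ('a::euclidean_space \<Rightarrow> real) set" where
  "mass_set m = {u. H1 u \<and> L2_norm_sq u = m}"

definition Imin :: "(real \<Rightarrow> real) \<Rightarrow> real \<Rightarrow> ('a::euclidean_space) itself \<Rightarrow> real" where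
  "Imin F m _ = Inf ((J F :: ('a \<Rightarrow> real) \<Rightarrow> real) ` mass_set m)"

end

theory Submission
  imports Defs "HOL-Computational_Algebra.Polynomial"
begin

text \<open>Dilating a function u of mass m to \<open>u (t\<^bsup>-1/N\<^esup> x)\<close> multiplies its mass and its
  potential energy \<open>\<integral> F(u)\<close> by t, but its kinetic energy \<open>\<integral> |\<nabla>u|\<^sup>2/2\<close> only by \<open>t\<^bsup>1-2/N\<^esup>\<close>.
  Applied to a minimizer this gives \<open>I\<^sub>t\<^sub>m < t I\<^sub>m\<close> for \<open>t > 1\<close>, provided the minimizer has
  positive kinetic energy, and then for \<open>a \<le> b\<close> we get
  \<open>I\<^sub>a\<^sub>+\<^sub>b < (a + b)/b I\<^sub>b = I\<^sub>b + a/b I\<^sub>b \<le> I\<^sub>b + I\<^sub>a\<close>.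

  The kinetic energy is positive because an \<open>L\<^sup>2\<close> function u whose weak derivative in some
  direction b vanishes is zero. Pairing u with a test function \<open>\<phi>\<close> is then invariant under
  translating \<open>\<phi>\<close> in direction b, so n translates of \<open>\<phi>\<close> with disjoint supports give
  \<open>n \<bar>\<integral> u \<phi>\<bar> \<le> \<surd>n (\<parallel>u\<parallel>\<^sup>2 + \<parallel>\<phi>\<parallel>\<^sup>2) / 2\<close> for all n. The test functions used are
  tensor products of smooth one-dimensional bumps: for them the translation invariance only
  needs one-dimensional primitives, and they approximate the indicators of all boxes.\<close>

section \<open>Smooth functions of one real variable\<close>

definition flat_exp :: "real \<Rightarrow> real" where
  "flat_exp y = (if y > 0 then exp (- inverse y) else 0)"

text \<open>The k-th derivative of \<open>flat_exp\<close> on the positive axis is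
  \<open>flat_exp_poly k (1/y) * exp (-1/y)\<close>, because differentiating \<open>p (1/y) * exp (-1/y)\<close>
  gives \<open>(1/y)\<^sup>2 * (p (1/y) - p' (1/y)) * exp (-1/y)\<close>.\<close>
fun flat_exp_poly :: "nat \<Rightarrow> real poly" where
  "flat_exp_poly 0 = 1"
| "flat_exp_poly (Suc k) = [:0,0,1:] * (flat_exp_poly k - pderiv (flat_exp_poly k))"

definition flat_exp_deriv :: "nat \<Rightarrow> real \<Rightarrow> real" where
  "flat_exp_deriv k y = (if y > 0 then poly (flat_exp_poly k) (inverse y) * exp (- inverse y) else 0)"

lemma flat_exp_deriv_0: "flat_exp_deriv 0 = flat_exp"
  by (auto simp: flat_exp_deriv_def flat_exp_def fun_eq_iff)

lemma poly_times_exp_neg_tendsto_0: "((\<lambda>z. poly q z * exp (- z)) \<longlongrightarrow> (0::real)) at_top"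
proof -
  have "((\<lambda>z. \<Sum>i\<le>degree q. coeff q i * (z ^ i / exp z)) \<longlongrightarrow> (\<Sum>i\<le>degree q. coeff q i * 0)) at_top"
    by (intro tendsto_sum tendsto_mult tendsto_const tendsto_power_div_exp_0)
  moreover have "poly q z * exp (- z) = (\<Sum>i\<le>degree q. coeff q i * (z ^ i / exp z))" for z
    by (simp add: poly_altdef sum_distrib_right exp_minus divide_inverse mult.assoc)
  ultimately show ?thesis by simp
qed

lemma flat_exp_deriv_has_derivative_pos:
  assumes "y > 0"
  shows "(flat_exp_deriv k has_real_derivative flat_exp_deriv (Suc k) y) (at y)"
proof -
  let ?p = "flat_exp_poly k"
  let ?g = "\<lambda>y. poly ?p (inverse y) * exp (- inverse y)"
  have "(?g has_real_derivative
      (poly (pderiv ?p) (inverse y) * (- (inverse y ^ 2)) * exp (- inverse y)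
       + poly ?p (inverse y) * (exp (- inverse y) * (inverse y ^ 2)))) (at y)"
    using assms
    by (auto intro!: derivative_eq_intros DERIV_chain2[OF poly_DERIV] simp: power2_eq_square)
  moreover have "poly (pderiv ?p) (inverse y) * (- (inverse y ^ 2)) * exp (- inverse y)
       + poly ?p (inverse y) * (exp (- inverse y) * (inverse y ^ 2)) = flat_exp_deriv (Suc k) y"
    using assms by (simp add: flat_exp_deriv_def algebra_simps power2_eq_square)
  ultimately have "(?g has_real_derivative flat_exp_deriv (Suc k) y) (at y)" by simp
  then show ?thesis
    by (rule has_field_derivative_transform_within_open[where S="{0<..}"])
      (use assms in \<open>auto simp: flat_exp_deriv_def\<close>)
qed

lemma flat_exp_deriv_has_derivative_neg:
  assumes "y < 0"
  shows "(flat_exp_deriv k has_real_derivative flat_exp_deriv (Suc k) y) (at y)"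
proof -
  have "((\<lambda>_. 0::real) has_real_derivative flat_exp_deriv (Suc k) y) (at y)"
    using assms by (simp add: flat_exp_deriv_def)
  then show ?thesis
    by (rule has_field_derivative_transform_within_open[where S="{..<0}"])
      (use assms in \<open>auto simp: flat_exp_deriv_def\<close>)
qed

lemma flat_exp_deriv_has_derivative_0:
  "(flat_exp_deriv k has_real_derivative flat_exp_deriv (Suc k) 0) (at 0)"
proof -
  let ?q = "\<lambda>h. (flat_exp_deriv k h - flat_exp_deriv k 0) / h"
  have "(?q \<longlongrightarrow> 0) (at (0::real))"
  proof (rule filterlim_split_at)
    have "\<forall>\<^sub>F h in at_left 0. 0 = ?q h"
      using eventually_at_left_real[of "-1::real" 0]
      by (auto elim!: eventually_mono simp: flat_exp_deriv_def)
    then show "(?q \<longlongrightarrow> 0) (at_left 0)"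
      by (rule Lim_transform_eventually[OF tendsto_const])
  next
    have "((\<lambda>z. poly ([:0,1:] * flat_exp_poly k) z * exp (- z)) \<longlongrightarrow> (0::real)) at_top"
      by (rule poly_times_exp_neg_tendsto_0)
    then have "((\<lambda>z. ?q (inverse z)) \<longlongrightarrow> 0) at_top"
      by (rule Lim_transform_eventually)
        (use eventually_gt_at_top[of 0] in \<open>eventually_elim, simp add: flat_exp_deriv_def field_simps\<close>)
    then show "(?q \<longlongrightarrow> 0) (at_right 0)"
      unfolding filterlim_at_top_to_right by simp
  qed
  then show ?thesis unfolding DERIV_def by (simp add: flat_exp_deriv_def)
qed

lemma flat_exp_deriv_has_derivative:
  "(flat_exp_deriv k has_real_derivative flat_exp_deriv (Suc k) y) (at y)"
  using flat_exp_deriv_has_derivative_pos flat_exp_deriv_has_derivative_neg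
    flat_exp_deriv_has_derivative_0
  by (cases "y > 0"; cases "y < 0") auto

definition smooth_real :: "(real \<Rightarrow> real) \<Rightarrow> bool" where
  "smooth_real g \<longleftrightarrow> (\<exists>S. g \<in> S \<and> (\<forall>h\<in>S. \<exists>h'\<in>S. \<forall>x. (h has_real_derivative h' x) (at x)))"

lemma smooth_realI_family:
  assumes "g \<in> S" "\<And>h. h \<in> S \<Longrightarrow> \<exists>h'\<in>S. \<forall>x. (h has_real_derivative h' x) (at x)"
  shows "smooth_real g"
  using assms unfolding smooth_real_def by blast

lemma smooth_realE:
  assumes "smooth_real g"
  obtains g' where "smooth_real g'" "\<And>x. (g has_real_derivative g' x) (at x)"
  using assms unfolding smooth_real_def by metis

lemma smooth_realI:
  assumes "\<And>x. (g has_real_derivative g' x) (at x)" "smooth_real g'"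
  shows "smooth_real g"
proof -
  obtain S where S: "g' \<in> S" "\<forall>h\<in>S. \<exists>h'\<in>S. \<forall>x. (h has_real_derivative h' x) (at x)"
    using assms(2) unfolding smooth_real_def by blast
  show ?thesis
    by (rule smooth_realI_family[of g "insert g S"]) (use S assms(1) in auto)
qed

lemma smooth_real_deriv:
  assumes "smooth_real g"
  shows "smooth_real (deriv g)" "(g has_real_derivative deriv g x) (at x)"
proof -
  obtain g' where g': "smooth_real g'" "\<And>x. (g has_real_derivative g' x) (at x)"
    using smooth_realE[OF assms] by blast
  then have "deriv g = g'" by (auto simp: fun_eq_iff intro: DERIV_imp_deriv)
  then show "smooth_real (deriv g)" "(g has_real_derivative deriv g x) (at x)" using g' by auto
qed

lemma smooth_real_continuous: "smooth_real g \<Longrightarrow> continuous_on UNIV g"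
  using smooth_real_deriv(2) by (meson DERIV_isCont continuous_at_imp_continuous_on)

lemma smooth_real_flat_exp: "smooth_real flat_exp"
proof (rule smooth_realI_family[of _ "range flat_exp_deriv"])
  show "flat_exp \<in> range flat_exp_deriv" by (metis flat_exp_deriv_0 rangeI)
qed (use flat_exp_deriv_has_derivative in blast)

lemma smooth_real_const: "smooth_real (\<lambda>_. c)"
  by (rule smooth_realI_family[of _ "{\<lambda>_. c, \<lambda>_. 0}"]) auto

lemma smooth_real_cmult:
  assumes "smooth_real g" shows "smooth_real (\<lambda>x. c * g x)"
proof (rule smooth_realI_family[of _ "{(\<lambda>x. c * h x) | h. smooth_real h}"])
  fix k assume "k \<in> {(\<lambda>x. c * h x) | h. smooth_real h}"
  then obtain h where h: "k = (\<lambda>x. c * h x)" "smooth_real h" by blast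
  obtain h' where "smooth_real h'" "\<And>x. (h has_real_derivative h' x) (at x)"
    using smooth_realE[OF h(2)] by blast
  then show "\<exists>h'\<in>{(\<lambda>x. c * h x) | h. smooth_real h}. \<forall>x. (k has_real_derivative h' x) (at x)"
    using h by (intro bexI[of _ "\<lambda>x. c * h' x"]) (auto intro!: derivative_eq_intros)
qed (use assms in auto)

lemma smooth_real_add:
  assumes "smooth_real g" "smooth_real h" shows "smooth_real (\<lambda>x. g x + h x)"
proof (rule smooth_realI_family[of _ "{(\<lambda>x. a x + b x) | a b. smooth_real a \<and> smooth_real b}"])
  fix k assume "k \<in> {(\<lambda>x. a x + b x) | a b. smooth_real a \<and> smooth_real b}"
  then obtain a b where k: "k = (\<lambda>x. a x + b x)" "smooth_real a" "smooth_real b" by blast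
  obtain a' where "smooth_real a'" "\<And>x. (a has_real_derivative a' x) (at x)"
    using smooth_realE[OF k(2)] by blast
  moreover obtain b' where "smooth_real b'" "\<And>x. (b has_real_derivative b' x) (at x)"
    using smooth_realE[OF k(3)] by blast
  ultimately show "\<exists>h'\<in>{(\<lambda>x. a x + b x) | a b. smooth_real a \<and> smooth_real b}.
      \<forall>x. (k has_real_derivative h' x) (at x)"
    using k by (auto intro!: derivative_eq_intros)
qed (use assms in auto)

lemma smooth_real_diff:
  assumes "smooth_real g" "smooth_real h" shows "smooth_real (\<lambda>x. g x - h x)"
  using smooth_real_add[OF assms(1) smooth_real_cmult[OF assms(2), of "-1"]] by simp

text \<open>The family witnessing smoothness of a product consists of all finite sums of products
  of two smooth functions, which is closed under differentiation by the Leibniz rule.\<close>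
lemma smooth_real_mult:
  assumes "smooth_real g" "smooth_real h" shows "smooth_real (\<lambda>x. g x * h x)"
proof -
  define ok where "ok L \<longleftrightarrow> (\<forall>p\<in>set L. smooth_real (fst p) \<and> smooth_real (snd p))"
    for L :: "((real \<Rightarrow> real) \<times> (real \<Rightarrow> real)) list"
  define psum where "psum L = (\<lambda>x::real. \<Sum>p\<leftarrow>L. fst p x * snd p x :: real)"
    for L :: "((real \<Rightarrow> real) \<times> (real \<Rightarrow> real)) list"
  have leibniz: "\<exists>L'. ok L' \<and> (\<forall>x. (psum L has_real_derivative psum L' x) (at x))"
    if "ok L" for L
    using that
  proof (induction L)
    case Nil
    then show ?case by (intro exI[of _ "[]"]) (auto simp: ok_def psum_def)
  next
    case (Cons p L)
    then obtain L' where L': "ok L'" "\<And>x. (psum L has_real_derivative psum L' x) (at x)"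
      by (auto simp: ok_def)
    have p: "smooth_real (fst p)" "smooth_real (snd p)" using Cons.prems by (auto simp: ok_def)
    show ?case
    proof (intro exI[of _ "(deriv (fst p), snd p) # (fst p, deriv (snd p)) # L'"] conjI allI)
      show "ok ((deriv (fst p), snd p) # (fst p, deriv (snd p)) # L')"
        using L'(1) p smooth_real_deriv by (auto simp: ok_def)
      fix x
      show "(psum (p # L) has_real_derivative psum ((deriv (fst p), snd p) # (fst p, deriv (snd p)) # L') x) (at x)"
        using DERIV_add[OF DERIV_mult'[OF smooth_real_deriv(2)[OF p(1)] smooth_real_deriv(2)[OF p(2)]] L'(2)]
        by (simp add: psum_def algebra_simps)
    qed
  qed
  have "psum [(g, h)] = (\<lambda>x. g x * h x)" by (simp add: psum_def)
  moreover have "smooth_real (psum [(g, h)])"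
    by (rule smooth_realI_family[of _ "psum ` Collect ok"]) (use assms leibniz in \<open>auto simp: ok_def\<close>)
  ultimately show ?thesis by simp
qed

lemma smooth_real_affine:
  assumes "smooth_real g" shows "smooth_real (\<lambda>y. g (a * y + b))"
proof (rule smooth_realI_family[of _ "{(\<lambda>y. h (a * y + b)) | h. smooth_real h}"])
  fix k assume "k \<in> {(\<lambda>y. h (a * y + b)) | h. smooth_real h}"
  then obtain h where h: "k = (\<lambda>y. h (a * y + b))" "smooth_real h" by blast
  have "(k has_real_derivative a * deriv h (a * x + b)) (at x)" for x
  proof -
    have "((\<lambda>y. h (a * y + b)) has_real_derivative deriv h (a * x + b) * a) (at x)"
      by (rule DERIV_chain2[OF smooth_real_deriv(2)[OF h(2)]]) (auto intro!: derivative_eq_intros)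
    then show ?thesis using h(1) by (simp add: mult.commute)
  qed
  moreover have "smooth_real (\<lambda>z. a * deriv h z)"
    using smooth_real_cmult smooth_real_deriv(1) h(2) by blast
  ultimately show "\<exists>h'\<in>{(\<lambda>y. h (a * y + b)) | h. smooth_real h}. \<forall>x. (k has_real_derivative h' x) (at x)"
    by (intro bexI[of _ "\<lambda>y. a * deriv h (a * y + b)"]) auto
qed (use assms in auto)

lemma antiderivative_compact_support:
  assumes g: "smooth_real g" and R: "R \<ge> 0" and supp: "\<And>y. R \<le> \<bar>y\<bar> \<Longrightarrow> g y = 0"
  defines "A \<equiv> (\<lambda>y. integral {-R-1..y} g)"
  shows "\<And>x. (A has_real_derivative g x) (at x)" "\<And>y. y \<le> -R \<Longrightarrow> A y = 0"
    "\<And>y. y \<ge> R \<Longrightarrow> A y = A R"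
proof -
  have cont: "continuous_on S g" for S using smooth_real_continuous[OF g] continuous_on_subset by blast
  show zero: "A y = 0" if "y \<le> -R" for y
  proof -
    have "integral {-R-1..y} g = integral {-R-1..y} (\<lambda>_. 0::real)"
      by (rule integral_cong) (use that supp in auto)
    then show ?thesis by (simp add: A_def)
  qed
  show "A y = A R" if "y \<ge> R" for y
  proof -
    have "integral {-R-1..y} g = integral {-R-1..R} g + integral {R..y} g"
      by (rule Henstock_Kurzweil_Integration.integral_combine[symmetric])
        (use that R in \<open>auto intro!: integrable_continuous_real cont\<close>)
    moreover have "integral {R..y} g = integral {R..y} (\<lambda>_. 0::real)"
      by (rule integral_cong) (use that supp R in auto)
    ultimately show ?thesis by (simp add: A_def)
  qed
  fix x
  show "(A has_real_derivative g x) (at x)"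
  proof (cases "x < -R")
    case True
    have "((\<lambda>_. 0) has_real_derivative g x) (at x)" using supp[of x] True by simp
    then show ?thesis
      by (rule has_field_derivative_transform_within_open[where S="{..<-R}"]) (use True zero in auto)
  next
    case False
    have "(A has_real_derivative g x) (at x within {-R-1..x+1})"
      unfolding A_def by (rule integral_has_real_derivative) (use False in \<open>auto intro: cont\<close>)
    moreover have "at x within {-R-1..x+1} = at x"
      by (rule at_within_interior) (use False in auto)
    ultimately show ?thesis by simp
  qed
qed

text \<open>The witness is \<open>\<Psi> y = \<integral>\<^bsub>y-h..y\<^esub> g\<close>.\<close>
lemma smooth_real_primitive_of_shift_difference:
  assumes g: "smooth_real g" and R: "R \<ge> 0" and supp: "\<And>y. R \<le> \<bar>y\<bar> \<Longrightarrow> g y = 0" and h: "h > 0"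
  obtains \<Psi> where "smooth_real \<Psi>" "\<And>y. deriv \<Psi> y = g y - g (y - h)"
    "\<And>y. R + h \<le> \<bar>y\<bar> \<Longrightarrow> \<Psi> y = 0"
proof
  define A where "A = (\<lambda>y. integral {-R-1..y} g)"
  have A: "\<And>x. (A has_real_derivative g x) (at x)" "\<And>y. y \<le> -R \<Longrightarrow> A y = 0"
    "\<And>y. y \<ge> R \<Longrightarrow> A y = A R"
    unfolding A_def by (rule antiderivative_compact_support[OF g R supp]; simp)+
  define \<Psi> where "\<Psi> = (\<lambda>y. A y - A (y - h))"
  have \<Psi>': "(\<Psi> has_real_derivative (g y - g (y - h))) (at y)" for y
  proof -
    have "((\<lambda>y. A (y - h)) has_real_derivative g (y - h) * 1) (at y)"
      by (rule DERIV_chain2[OF A(1)]) (auto intro!: derivative_eq_intros)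
    then show ?thesis unfolding \<Psi>_def by (intro DERIV_diff A(1)) simp
  qed
  have "smooth_real (\<lambda>y. g (1 * y + - h))" by (rule smooth_real_affine[OF g])
  then have "smooth_real (\<lambda>y. g y - g (y - h))" by (simp add: smooth_real_diff[OF g])
  then show "smooth_real \<Psi>" by (rule smooth_realI[OF \<Psi>'])
  show "deriv \<Psi> y = g y - g (y - h)" for y by (rule DERIV_imp_deriv[OF \<Psi>'])
  show "\<Psi> y = 0" if "R + h \<le> \<bar>y\<bar>" for y
    using that h A(2)[of y] A(2)[of "y - h"] A(3)[of y] A(3)[of "y - h"]
    by (cases "y \<ge> 0") (auto simp: \<Psi>_def)
qed

section \<open>Tensor products of smooth functions and test functions\<close>

definition tensor_prod :: "('a::euclidean_space \<Rightarrow> real \<Rightarrow> real) \<Rightarrow> 'a \<Rightarrow> real" where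
  "tensor_prod g x = (\<Prod>c\<in>Basis. g c (x \<bullet> c))"

inductive_set tensor_sums :: "('a::euclidean_space \<Rightarrow> real) set" where
  tensor_prod: "(\<And>c. c \<in> Basis \<Longrightarrow> smooth_real (g c)) \<Longrightarrow> tensor_prod g \<in> tensor_sums"
| add: "f \<in> tensor_sums \<Longrightarrow> h \<in> tensor_sums \<Longrightarrow> (\<lambda>x. f x + h x) \<in> tensor_sums"

lemma tensor_prod_fun_upd:
  assumes b: "b \<in> Basis"
  shows "tensor_prod (g(b := f)) x = f (x \<bullet> b) * (\<Prod>c\<in>Basis - {b}. g c (x \<bullet> c))"
proof -
  have "tensor_prod (g(b := f)) x = f (x \<bullet> b) * (\<Prod>c\<in>Basis - {b}. (g(b := f)) c (x \<bullet> c))"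
    unfolding tensor_prod_def using b by (subst prod.remove[of _ b]) auto
  also have "(\<Prod>c\<in>Basis - {b}. (g(b := f)) c (x \<bullet> c)) = (\<Prod>c\<in>Basis - {b}. g c (x \<bullet> c))"
    by (rule prod.cong) auto
  finally show ?thesis .
qed

lemma tensor_prod_remove:
  assumes b: "b \<in> Basis"
  shows "tensor_prod g x = g b (x \<bullet> b) * (\<Prod>c\<in>Basis - {b}. g c (x \<bullet> c))"
  using tensor_prod_fun_upd[OF b, of g "g b" x] by simp

lemma zero_in_tensor_sums: "(\<lambda>_. 0) \<in> tensor_sums"
proof -
  have "tensor_prod (\<lambda>c y. 0) = (\<lambda>_::'a. 0::real)"
    by (auto simp: tensor_prod_def fun_eq_iff prod_zero_iff)
  moreover have "tensor_prod (\<lambda>c y. 0) \<in> (tensor_sums :: ('a \<Rightarrow> real) set)"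
    by (rule tensor_sums.tensor_prod) (rule smooth_real_const)
  ultimately show ?thesis by simp
qed

lemma sum_in_tensor_sums:
  "finite I \<Longrightarrow> (\<And>i. i \<in> I \<Longrightarrow> f i \<in> tensor_sums) \<Longrightarrow> (\<lambda>x. \<Sum>i\<in>I. f i x) \<in> tensor_sums"
proof (induction I rule: finite_induct)
  case empty then show ?case by (simp add: zero_in_tensor_sums)
next
  case (insert i I)
  then have "(\<lambda>x. f i x + (\<Sum>i\<in>I. f i x)) \<in> tensor_sums" by (intro tensor_sums.add) auto
  then show ?case using insert by simp
qed

lemma has_derivative_tensor_prod:
  assumes "\<And>c. c \<in> Basis \<Longrightarrow> smooth_real (g c)"
  shows "(tensor_prod g has_derivative
     (\<lambda>d. \<Sum>c\<in>Basis. ((d \<bullet> c) * deriv (g c) (x \<bullet> c)) * (\<Prod>j\<in>Basis - {c}. g j (x \<bullet> j)))) (at x)"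
  unfolding tensor_prod_def
proof (rule has_derivative_prod)
  fix c :: 'a assume c: "c \<in> Basis"
  show "((\<lambda>x. g c (x \<bullet> c)) has_derivative (\<lambda>d. (d \<bullet> c) * deriv (g c) (x \<bullet> c))) (at x)"
    by (rule DERIV_compose_FDERIV[OF smooth_real_deriv(2)[OF assms[OF c]]])
       (rule bounded_linear_imp_has_derivative[OF bounded_linear_inner_left])
qed

lemma tensor_sums_has_derivative:
  assumes "f \<in> tensor_sums"
  shows "\<exists>D. (\<forall>x. (f has_derivative D x) (at x)) \<and> (\<forall>d. (\<lambda>x. D x d) \<in> tensor_sums)"
  using assms
proof induction
  case (tensor_prod g)
  let ?D = "\<lambda>x d. \<Sum>c\<in>Basis. ((d \<bullet> c) * deriv (g c) (x \<bullet> c)) * (\<Prod>j\<in>Basis - {c}. g j (x \<bullet> j))"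
  show ?case
  proof (intro exI[of _ ?D] conjI allI)
    fix x show "(tensor_prod g has_derivative ?D x) (at x)"
      by (rule has_derivative_tensor_prod) (use tensor_prod in auto)
  next
    fix d :: 'a
    have "(\<lambda>x. \<Sum>c\<in>Basis. tensor_prod (g(c := (\<lambda>y. (d \<bullet> c) * deriv (g c) y))) x) \<in> tensor_sums"
    proof (rule sum_in_tensor_sums)
      fix c :: 'a assume c: "c \<in> Basis"
      show "tensor_prod (g(c := (\<lambda>y. (d \<bullet> c) * deriv (g c) y))) \<in> tensor_sums"
        by (rule tensor_sums.tensor_prod)
          (use tensor_prod c smooth_real_cmult smooth_real_deriv(1) in auto)
    qed simp
    then show "(\<lambda>x. ?D x d) \<in> tensor_sums" by (simp add: tensor_prod_fun_upd)
  qed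
next
  case (add f h)
  then obtain D1 D2 where D: "\<And>x. (f has_derivative D1 x) (at x)" "\<And>d. (\<lambda>x. D1 x d) \<in> tensor_sums"
    "\<And>x. (h has_derivative D2 x) (at x)" "\<And>d. (\<lambda>x. D2 x d) \<in> tensor_sums" by blast
  show ?case
    by (rule exI[of _ "\<lambda>x d. D1 x d + D2 x d"]) (auto intro!: has_derivative_add D tensor_sums.add)
qed

lemma frechet_derivative_in_tensor_sums:
  assumes "f \<in> tensor_sums"
  shows "(\<lambda>x. frechet_derivative f (at x) d) \<in> tensor_sums"
proof -
  obtain D where D: "\<And>x. (f has_derivative D x) (at x)" "\<And>d. (\<lambda>x. D x d) \<in> tensor_sums"
    using tensor_sums_has_derivative[OF assms] by blast
  have "frechet_derivative f (at x) = D x" for x using frechet_derivative_at[OF D(1)] by simp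
  then show ?thesis using D(2) by simp
qed

lemma smooth_fun_tensor_sums: "f \<in> tensor_sums \<Longrightarrow> smooth_fun f"
proof -
  assume f: "f \<in> tensor_sums"
  have "iter_deriv ds f \<in> tensor_sums" for ds
    by (induction ds) (auto intro: f frechet_derivative_in_tensor_sums)
  then show ?thesis
    unfolding smooth_fun_def differentiable_def using tensor_sums_has_derivative by blast
qed

lemma frechet_derivative_tensor_prod_Basis:
  assumes "\<And>c. c \<in> Basis \<Longrightarrow> smooth_real (g c)" "b \<in> Basis"
  shows "frechet_derivative (tensor_prod g) (at x) b
    = deriv (g b) (x \<bullet> b) * (\<Prod>j\<in>Basis - {b}. g j (x \<bullet> j))"
proof -
  have "frechet_derivative (tensor_prod g) (at x) b =
     (\<Sum>c\<in>Basis. ((b \<bullet> c) * deriv (g c) (x \<bullet> c)) * (\<Prod>j\<in>Basis - {c}. g j (x \<bullet> j)))"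
    by (simp flip: frechet_derivative_at[OF has_derivative_tensor_prod[of g x, OF assms(1)]])
  also have "\<dots> = (\<Sum>c\<in>Basis. if c = b then deriv (g c) (x \<bullet> c) * (\<Prod>j\<in>Basis - {c}. g j (x \<bullet> j)) else 0)"
    by (rule sum.cong) (use assms(2) in \<open>simp_all add: inner_Basis\<close>)
  also have "\<dots> = deriv (g b) (x \<bullet> b) * (\<Prod>j\<in>Basis - {b}. g j (x \<bullet> j))"
    using assms(2) by (simp add: sum.delta')
  finally show ?thesis .
qed

definition tensor_test :: "('a::euclidean_space \<Rightarrow> real \<Rightarrow> real) \<Rightarrow> real \<Rightarrow> bool" where
  "tensor_test g R \<longleftrightarrow> (\<forall>c\<in>Basis. smooth_real (g c) \<and> (\<forall>y. R \<le> \<bar>y\<bar> \<longrightarrow> g c y = 0))"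

lemma tensor_testD:
  "tensor_test g R \<Longrightarrow> c \<in> Basis \<Longrightarrow> smooth_real (g c)"
  "tensor_test g R \<Longrightarrow> c \<in> Basis \<Longrightarrow> R \<le> \<bar>y\<bar> \<Longrightarrow> g c y = 0"
  unfolding tensor_test_def by blast+

lemma test_fun_tensor_prod:
  assumes g: "tensor_test g R"
  shows "test_fun (tensor_prod g)"
  unfolding test_fun_def
proof
  show "smooth_fun (tensor_prod g)"
    by (rule smooth_fun_tensor_sums) (rule tensor_sums.tensor_prod, rule tensor_testD(1)[OF g])
  have "{x. tensor_prod g x \<noteq> 0} \<subseteq> cbox (- R *\<^sub>R One) (R *\<^sub>R One)"
  proof
    fix x assume "x \<in> {x. tensor_prod g x \<noteq> 0}"
    then have "\<forall>c\<in>Basis. g c (x \<bullet> c) \<noteq> 0" by (auto simp: tensor_prod_def prod_zero_iff)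
    then have "\<forall>c\<in>Basis. \<bar>x \<bullet> c\<bar> < R" using tensor_testD(2)[OF g] by force
    then show "x \<in> cbox (- R *\<^sub>R One) (R *\<^sub>R One)" by (auto simp: mem_box abs_less_iff)
  qed
  then show "compact (closure {x. tensor_prod g x \<noteq> 0})"
    unfolding compact_closure by (rule bounded_subset[OF bounded_cbox])
qed

lemma smooth_fun_iter_deriv_differentiable:
  "smooth_fun f \<Longrightarrow> iter_deriv ds f differentiable (at x)"
  unfolding smooth_fun_def by blast

lemma smooth_fun_continuous: "smooth_fun f \<Longrightarrow> continuous_on UNIV f"
  using smooth_fun_iter_deriv_differentiable[of f "[]"]
  by (simp add: continuous_at_imp_continuous_on differentiable_imp_continuous_within)

lemma smooth_fun_frechet_derivative:
  assumes "smooth_fun f"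
  shows "smooth_fun (\<lambda>x. frechet_derivative f (at x) b)"
proof -
  have "iter_deriv (ds @ [b]) f = iter_deriv ds (\<lambda>x. frechet_derivative f (at x) b)" for ds
    by (induction ds) auto
  then show ?thesis
    using smooth_fun_iter_deriv_differentiable[OF assms] unfolding smooth_fun_def by metis
qed

lemma test_fun_continuous: "test_fun \<phi> \<Longrightarrow> continuous_on UNIV \<phi>"
  unfolding test_fun_def using smooth_fun_continuous by blast

lemma test_fun_frechet_derivative_continuous:
  "test_fun \<phi> \<Longrightarrow> continuous_on UNIV (\<lambda>x. frechet_derivative \<phi> (at x) b)"
  unfolding test_fun_def using smooth_fun_continuous smooth_fun_frechet_derivative by blast

lemma iter_deriv_dilate:
  assumes "smooth_fun f"
  shows "iter_deriv ds (\<lambda>x. f (s *\<^sub>R x)) = (\<lambda>x. s ^ length ds * iter_deriv ds f (s *\<^sub>R x))"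
proof (induction ds)
  case Nil then show ?case by simp
next
  case (Cons d ds)
  let ?h = "iter_deriv ds f"
  have "frechet_derivative (\<lambda>y. s ^ length ds * ?h (s *\<^sub>R y)) (at x) d
        = s ^ length (d # ds) * frechet_derivative ?h (at (s *\<^sub>R x)) d" for x
  proof -
    let ?h' = "frechet_derivative ?h (at (s *\<^sub>R x))"
    have hd: "(?h has_derivative ?h') (at (s *\<^sub>R x))"
      using smooth_fun_iter_deriv_differentiable[OF assms] frechet_derivative_works by blast
    have sd: "((\<lambda>y. s *\<^sub>R y) has_derivative (\<lambda>y. s *\<^sub>R y)) (at x)"
      by (intro derivative_eq_intros) auto
    have "((\<lambda>y. s ^ length ds * ?h (s *\<^sub>R y)) has_derivative (\<lambda>v. s ^ length ds * ?h' (s *\<^sub>R v))) (at x)"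
      using has_derivative_mult_right[OF diff_chain_at[OF sd hd]] by (simp add: o_def)
    then have "frechet_derivative (\<lambda>y. s ^ length ds * ?h (s *\<^sub>R y)) (at x)
        = (\<lambda>v. s ^ length ds * ?h' (s *\<^sub>R v))"
      by (rule frechet_derivative_at[symmetric])
    moreover have "?h' (s *\<^sub>R d) = s * ?h' d"
      using linear_frechet_derivative[OF smooth_fun_iter_deriv_differentiable[OF assms]]
      by (simp add: linear_scale)
    ultimately show ?thesis by simp
  qed
  then show ?case by (simp add: Cons.IH fun_eq_iff)
qed

lemma smooth_fun_dilate:
  assumes "smooth_fun \<phi>"
  shows "smooth_fun (\<lambda>x. \<phi> (s *\<^sub>R x))"
  unfolding smooth_fun_def
proof (intro allI)
  fix ds x
  have hd: "(iter_deriv ds \<phi> has_derivative frechet_derivative (iter_deriv ds \<phi>) (at (s *\<^sub>R x)))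
      (at (s *\<^sub>R x))"
    using smooth_fun_iter_deriv_differentiable[OF assms] frechet_derivative_works by blast
  have sd: "((\<lambda>y. s *\<^sub>R y) has_derivative (\<lambda>y. s *\<^sub>R y)) (at x)"
    by (intro derivative_eq_intros) auto
  have "(\<lambda>y. s ^ length ds * iter_deriv ds \<phi> (s *\<^sub>R y)) differentiable (at x)"
    unfolding differentiable_def
    using has_derivative_mult_right[OF diff_chain_at[OF sd hd]] by (auto simp: o_def)
  then show "iter_deriv ds (\<lambda>x. \<phi> (s *\<^sub>R x)) differentiable (at x)"
    unfolding iter_deriv_dilate[OF assms] .
qed

lemma test_fun_dilate:
  assumes t: "test_fun \<phi>" and s: "s \<noteq> 0"
  shows "test_fun (\<lambda>x. \<phi> (s *\<^sub>R x))"
proof -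
  have "{x. \<phi> (s *\<^sub>R x) \<noteq> 0} \<subseteq> (\<lambda>y. (1/s) *\<^sub>R y) ` closure {x. \<phi> x \<noteq> 0}"
  proof
    fix x assume "x \<in> {x. \<phi> (s *\<^sub>R x) \<noteq> 0}"
    then have "s *\<^sub>R x \<in> closure {x. \<phi> x \<noteq> 0}" by (meson closure_subset mem_Collect_eq subsetD)
    moreover have "x = (1/s) *\<^sub>R (s *\<^sub>R x)" using s by simp
    ultimately show "x \<in> (\<lambda>y. (1/s) *\<^sub>R y) ` closure {x. \<phi> x \<noteq> 0}" by blast
  qed
  moreover have "compact ((\<lambda>y. (1/s) *\<^sub>R y) ` closure {x. \<phi> x \<noteq> 0})"
    using t unfolding test_fun_def by (intro compact_scaling) auto
  ultimately have "bounded {x. \<phi> (s *\<^sub>R x) \<noteq> 0}" by (meson bounded_subset compact_imp_bounded)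
  then show ?thesis
    using smooth_fun_dilate t unfolding test_fun_def compact_closure by blast
qed

lemma frechet_derivative_dilate:
  assumes "test_fun \<phi>"
  shows "frechet_derivative (\<lambda>x. \<phi> (s *\<^sub>R x)) (at x) b = s * frechet_derivative \<phi> (at (s *\<^sub>R x)) b"
  using assms fun_cong[OF iter_deriv_dilate[of \<phi> "[b]" s], of x] by (simp add: test_fun_def)

section \<open>Lebesgue integrals and square integrable functions\<close>

lemma lebesgue_affine_change_of_variables:
  fixes f :: "'a::euclidean_space \<Rightarrow> real"
  assumes f: "f \<in> borel_measurable lebesgue" and s: "s \<noteq> 0"
  shows "integrable lebesgue (\<lambda>x. f (s *\<^sub>R x + t)) \<longleftrightarrow> integrable lebesgue f"
    "(\<integral>x. f (s *\<^sub>R x + t) \<partial>lebesgue) = (\<integral>x. f x \<partial>lebesgue) / \<bar>s\<bar> ^ DIM('a)"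
proof -
  define T where "T = (\<lambda>x::'a. t + (\<Sum>j\<in>Basis. (s * (x \<bullet> j)) *\<^sub>R j))"
  have T: "T x = s *\<^sub>R x + t" for x
  proof -
    have "(\<Sum>j\<in>Basis. (s * (x \<bullet> j)) *\<^sub>R j) = s *\<^sub>R (\<Sum>j\<in>Basis. (x \<bullet> j) *\<^sub>R j)"
      by (simp add: scaleR_sum_right)
    then show ?thesis by (simp add: T_def euclidean_representation)
  qed
  have "lebesgue = density (distr lebesgue lebesgue T) (\<lambda>_. ennreal (\<Prod>j\<in>(Basis::'a set). \<bar>s\<bar>))"
    unfolding T_def by (rule lebesgue_affine_euclidean) (rule s)
  then have L: "lebesgue = density (distr lebesgue lebesgue T) (\<lambda>_. \<bar>s\<bar> ^ DIM('a))"
    by simp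
  have Tm: "T \<in> lebesgue \<rightarrow>\<^sub>M lebesgue"
    unfolding T_def by (rule lebesgue_affine_measurable) (use s in simp)
  have fm: "f \<in> borel_measurable (distr lebesgue lebesgue T)" using f by simp
  have pos: "\<bar>s\<bar> ^ DIM('a) > 0" using s by simp
  have "integrable lebesgue f \<longleftrightarrow> integrable (density (distr lebesgue lebesgue T) (\<lambda>_. \<bar>s\<bar> ^ DIM('a))) f"
    by (subst L) (rule refl)
  also have "\<dots> \<longleftrightarrow> integrable (distr lebesgue lebesgue T) (\<lambda>x. (\<bar>s\<bar> ^ DIM('a)) *\<^sub>R f x)"
    by (rule integrable_density) (use fm in auto)
  also have "\<dots> \<longleftrightarrow> integrable lebesgue (\<lambda>x. (\<bar>s\<bar> ^ DIM('a)) *\<^sub>R f (T x))"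
    by (rule integrable_distr_eq) (use Tm f in auto)
  finally show "integrable lebesgue (\<lambda>x. f (s *\<^sub>R x + t)) \<longleftrightarrow> integrable lebesgue f"
    using pos by (simp add: T)
  have "(\<integral>x. f x \<partial>lebesgue) = (\<integral>x. f x \<partial>density (distr lebesgue lebesgue T) (\<lambda>_. \<bar>s\<bar> ^ DIM('a)))"
    by (subst L) (rule refl)
  also have "\<dots> = (\<integral>x. (\<bar>s\<bar> ^ DIM('a)) *\<^sub>R f x \<partial>distr lebesgue lebesgue T)"
    by (rule integral_density) (use fm in auto)
  also have "\<dots> = (\<integral>x. (\<bar>s\<bar> ^ DIM('a)) *\<^sub>R f (T x) \<partial>lebesgue)"
    by (rule integral_distr) (use Tm f in auto)
  finally show "(\<integral>x. f (s *\<^sub>R x + t) \<partial>lebesgue) = (\<integral>x. f x \<partial>lebesgue) / \<bar>s\<bar> ^ DIM('a)"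
    using pos by (simp add: T field_simps)
qed

lemma lebesgue_integral_dilate:
  fixes f :: "'a::euclidean_space \<Rightarrow> real"
  assumes "f \<in> borel_measurable lebesgue" "s \<noteq> 0"
  shows "integrable lebesgue (\<lambda>x. f (s *\<^sub>R x)) \<longleftrightarrow> integrable lebesgue f"
    "(\<integral>x. f (s *\<^sub>R x) \<partial>lebesgue) = (\<integral>x. f x \<partial>lebesgue) / \<bar>s\<bar> ^ DIM('a)"
  using lebesgue_affine_change_of_variables[OF assms, of 0] by simp_all

lemma lebesgue_integral_translate:
  fixes f :: "'a::euclidean_space \<Rightarrow> real"
  assumes "f \<in> borel_measurable lebesgue"
  shows "(\<integral>x. f (x + t) \<partial>lebesgue) = (\<integral>x. f x \<partial>lebesgue)"
  using lebesgue_affine_change_of_variables(2)[OF assms, of 1 t] by simp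

lemma measurable_dilate:
  fixes f :: "'a::euclidean_space \<Rightarrow> real"
  assumes "f \<in> borel_measurable lebesgue"
  shows "(\<lambda>x. f (s *\<^sub>R x)) \<in> borel_measurable lebesgue"
  using measurable_compose[OF lebesgue_measurable_scaling assms] by (simp add: o_def)

lemma continuous_imp_lebesgue_measurable:
  fixes \<phi> :: "'a::euclidean_space \<Rightarrow> real"
  shows "continuous_on UNIV \<phi> \<Longrightarrow> \<phi> \<in> borel_measurable lebesgue"
  using continuous_imp_measurable_on_sets_lebesgue[of UNIV \<phi>] by simp

lemma L2_measurable: "L2 f \<Longrightarrow> f \<in> borel_measurable lebesgue"
  unfolding L2_def by blast

lemma L2_integrable_power2: "L2 f \<Longrightarrow> integrable lebesgue (\<lambda>x. (f x)\<^sup>2)"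
  unfolding L2_def by blast

lemma integrable_L2_mult:
  assumes f: "L2 f" and g: "L2 g"
  shows "integrable lebesgue (\<lambda>x. f x * g x)"
proof (rule Bochner_Integration.integrable_bound[where f="\<lambda>x. (f x)\<^sup>2 + (g x)\<^sup>2"])
  show "integrable lebesgue (\<lambda>x. (f x)\<^sup>2 + (g x)\<^sup>2)"
    using f g by (simp add: L2_integrable_power2)
  show "(\<lambda>x. f x * g x) \<in> borel_measurable lebesgue"
    using L2_measurable[OF f] L2_measurable[OF g] by (rule borel_measurable_times)
  have "\<bar>f x * g x\<bar> \<le> (f x)\<^sup>2 + (g x)\<^sup>2" for x
  proof -
    have "2 * (\<bar>f x\<bar> * \<bar>g x\<bar>) \<le> (f x)\<^sup>2 + (g x)\<^sup>2"
      using sum_squares_bound[of "\<bar>f x\<bar>" "\<bar>g x\<bar>"] by (simp add: mult.assoc)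
    moreover have "0 \<le> \<bar>f x\<bar> * \<bar>g x\<bar>" by simp
    ultimately show ?thesis unfolding abs_mult by linarith
  qed
  then show "AE x in lebesgue. norm (f x * g x) \<le> norm ((f x)\<^sup>2 + (g x)\<^sup>2)"
    by simp
qed

lemma L2_diff:
  assumes f: "L2 f" and g: "L2 g"
  shows "L2 (\<lambda>x. f x - g x)"
  unfolding L2_def
proof
  show "(\<lambda>x. f x - g x) \<in> borel_measurable lebesgue"
    using L2_measurable[OF f] L2_measurable[OF g] by (rule borel_measurable_diff)
  have "(\<lambda>x. (f x - g x)\<^sup>2) = (\<lambda>x. (f x)\<^sup>2 + (g x)\<^sup>2 - 2 * (f x * g x))"
    by (simp add: fun_eq_iff power2_diff)
  moreover have "integrable lebesgue (\<lambda>x. (f x)\<^sup>2 + (g x)\<^sup>2 - 2 * (f x * g x))"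
    by (intro Bochner_Integration.integrable_diff Bochner_Integration.integrable_add
        integrable_mult_right integrable_L2_mult L2_integrable_power2 f g)
  ultimately show "integrable lebesgue (\<lambda>x. (f x - g x)\<^sup>2)" by simp
qed

lemma L2_cmult: "L2 f \<Longrightarrow> L2 (\<lambda>x. c * f x)"
  unfolding L2_def by (auto simp: power_mult_distrib intro!: borel_measurable_times)

lemma L2_indicator:
  assumes "S \<in> lmeasurable"
  shows "L2 (indicator S :: 'a::euclidean_space \<Rightarrow> real)"
  unfolding L2_def
proof
  have int: "integrable lebesgue (indicator S :: 'a \<Rightarrow> real)"
    using fmeasurableD[OF assms] fmeasurableD2[OF assms] by (simp add: less_top)
  then show "(indicator S :: 'a \<Rightarrow> real) \<in> borel_measurable lebesgue"
    by (rule borel_measurable_integrable)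
  have "(\<lambda>x. (indicator S x)\<^sup>2) = (indicator S :: 'a \<Rightarrow> real)"
    by (auto simp: fun_eq_iff split: split_indicator)
  then show "integrable lebesgue (\<lambda>x. (indicator S x :: real)\<^sup>2)" using int by simp
qed

lemma test_fun_L2:
  fixes \<phi> :: "'a::euclidean_space \<Rightarrow> real"
  assumes t: "test_fun \<phi>"
  shows "L2 \<phi>"
  unfolding L2_def
proof
  let ?K = "closure {x. \<phi> x \<noteq> 0}"
  have K: "compact ?K" using t unfolding test_fun_def by simp
  show m: "\<phi> \<in> borel_measurable lebesgue"
    by (rule continuous_imp_lebesgue_measurable[OF test_fun_continuous[OF t]])
  have "continuous_on ?K \<phi>" by (rule continuous_on_subset[OF test_fun_continuous[OF t]]) simp
  then have "bounded (\<phi> ` ?K)" using K by (intro compact_imp_bounded compact_continuous_image)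
  then obtain B where B: "\<And>x. x \<in> ?K \<Longrightarrow> \<bar>\<phi> x\<bar> \<le> B" unfolding bounded_iff by force
  have bound: "(\<phi> x)\<^sup>2 \<le> B\<^sup>2 * indicator ?K x" for x
  proof (cases "x \<in> ?K")
    case True
    then show ?thesis using power_mono[OF B[OF True] abs_ge_zero, of 2] by simp
  next
    case False
    then have "\<phi> x = 0" by (meson closure_subset mem_Collect_eq subsetD)
    then show ?thesis by simp
  qed
  show "integrable lebesgue (\<lambda>x. (\<phi> x)\<^sup>2)"
  proof (rule Bochner_Integration.integrable_bound)
    show "integrable lebesgue (\<lambda>x. B\<^sup>2 * indicator ?K x :: real)"
      using fmeasurableD[OF lmeasurable_compact[OF K]] fmeasurableD2[OF lmeasurable_compact[OF K]]
      by (intro integrable_mult_right integrable_real_indicator) (simp_all add: less_top)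
    show "(\<lambda>x. (\<phi> x)\<^sup>2) \<in> borel_measurable lebesgue" using m by (rule borel_measurable_power)
    show "AE x in lebesgue. norm ((\<phi> x)\<^sup>2) \<le> norm (B\<^sup>2 * indicator ?K x)"
      using bound by (intro AE_I2) (simp add: abs_mult)
  qed
qed

lemma L2_dilate:
  fixes u :: "'a::euclidean_space \<Rightarrow> real"
  assumes u: "L2 u" and s: "s \<noteq> 0"
  shows "L2 (\<lambda>x. u (s *\<^sub>R x))" "L2_norm_sq (\<lambda>x. u (s *\<^sub>R x)) = L2_norm_sq u / \<bar>s\<bar> ^ DIM('a)"
proof -
  have u2: "(\<lambda>x. (u x)\<^sup>2) \<in> borel_measurable lebesgue"
    using L2_measurable[OF u] by (rule borel_measurable_power)
  show "L2 (\<lambda>x. u (s *\<^sub>R x))" unfolding L2_def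
    using measurable_dilate[OF L2_measurable[OF u]] lebesgue_integral_dilate(1)[OF u2 s]
      L2_integrable_power2[OF u] by simp
  show "L2_norm_sq (\<lambda>x. u (s *\<^sub>R x)) = L2_norm_sq u / \<bar>s\<bar> ^ DIM('a)"
    unfolding L2_norm_sq_def using lebesgue_integral_dilate(2)[OF u2 s] by simp
qed

section \<open>The fundamental lemma of the calculus of variations\<close>

lemma flat_exp_nonneg: "0 \<le> flat_exp y"
  by (simp add: flat_exp_def)

lemma flat_exp_le_1: "flat_exp y \<le> 1"
  by (simp add: flat_exp_def)

lemma flat_exp_nonpos_eq_0: "y \<le> 0 \<Longrightarrow> flat_exp y = 0"
  by (simp add: flat_exp_def)

lemma flat_exp_tendsto_1:
  assumes "t > 0" shows "(\<lambda>n. flat_exp (real (Suc n) * t)) \<longlonglongrightarrow> 1"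
proof -
  have "(\<lambda>n. exp (- (inverse t * inverse (real (Suc n))))) \<longlonglongrightarrow> exp (- (inverse t * 0))"
    by (intro tendsto_intros LIMSEQ_inverse_real_of_nat)
  moreover have "flat_exp (real (Suc n) * t) = exp (- (inverse t * inverse (real (Suc n))))" for n
    using assms by (simp add: flat_exp_def mult.commute)
  ultimately show ?thesis by simp
qed

definition interval_bump :: "nat \<Rightarrow> real \<Rightarrow> real \<Rightarrow> real \<Rightarrow> real" where
  "interval_bump n lo hi y = flat_exp (real (Suc n) * (y - lo)) * flat_exp (real (Suc n) * (hi - y))"

lemma smooth_real_interval_bump: "smooth_real (interval_bump n lo hi)"
proof -
  have "interval_bump n lo hi = (\<lambda>y. flat_exp (real (Suc n) * y + (- real (Suc n) * lo))
      * flat_exp ((- real (Suc n)) * y + real (Suc n) * hi))"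
    by (simp add: interval_bump_def fun_eq_iff algebra_simps)
  then show ?thesis by (simp add: smooth_real_mult smooth_real_affine smooth_real_flat_exp)
qed

lemma interval_bump_nonneg: "0 \<le> interval_bump n lo hi y"
  by (simp add: interval_bump_def flat_exp_nonneg)

lemma interval_bump_le_1: "interval_bump n lo hi y \<le> 1"
  unfolding interval_bump_def by (rule mult_le_one[OF flat_exp_le_1 flat_exp_nonneg flat_exp_le_1])

lemma interval_bump_outside: "y \<le> lo \<or> y \<ge> hi \<Longrightarrow> interval_bump n lo hi y = 0"
  unfolding interval_bump_def
  by (auto simp: mult_nonneg_nonpos flat_exp_nonpos_eq_0)

lemma interval_bump_tendsto:
  "(\<lambda>n. interval_bump n lo hi y) \<longlonglongrightarrow> (if lo < y \<and> y < hi then 1 else 0)"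
proof (cases "lo < y \<and> y < hi")
  case True
  have "(\<lambda>n. interval_bump n lo hi y) \<longlonglongrightarrow> 1 * 1"
    unfolding interval_bump_def by (intro tendsto_mult flat_exp_tendsto_1) (use True in auto)
  then show ?thesis using True by simp
next
  case False
  then have "interval_bump n lo hi y = 0" for n by (intro interval_bump_outside) auto
  moreover have "(if lo < y \<and> y < hi then 1 else 0) = (0::real)" using False by auto
  ultimately show ?thesis by simp
qed

definition box_bump :: "nat \<Rightarrow> 'a::euclidean_space \<Rightarrow> 'a \<Rightarrow> 'a \<Rightarrow> real" where
  "box_bump n a b = tensor_prod (\<lambda>c. interval_bump n (a \<bullet> c) (b \<bullet> c))"

lemma box_bump_tendsto_indicator:
  "(\<lambda>n. box_bump n a b x) \<longlonglongrightarrow> indicator (box a b) x"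
proof -
  have "(\<lambda>n. box_bump n a b x) \<longlonglongrightarrow> (\<Prod>c\<in>Basis. (if a \<bullet> c < x \<bullet> c \<and> x \<bullet> c < b \<bullet> c then 1 else 0))"
    unfolding box_bump_def tensor_prod_def by (intro tendsto_prod interval_bump_tendsto)
  moreover have "(\<Prod>c\<in>Basis. (if a \<bullet> c < x \<bullet> c \<and> x \<bullet> c < b \<bullet> c then 1 else 0))
      = (indicator (box a b) x :: real)"
    by (auto simp: mem_box indicator_def prod_zero_iff)
  ultimately show ?thesis by simp
qed

lemma abs_box_bump_le_indicator: "\<bar>box_bump n a b x\<bar> \<le> indicator (cbox a b) x"
proof (cases "x \<in> box a b")
  case True
  then have "x \<in> cbox a b" using box_subset_cbox by blast
  moreover have "box_bump n a b x \<le> 1" unfolding box_bump_def tensor_prod_def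
    by (rule prod_le_1) (auto simp: interval_bump_nonneg interval_bump_le_1)
  moreover have "box_bump n a b x \<ge> 0" unfolding box_bump_def tensor_prod_def
    by (rule prod_nonneg) (auto simp: interval_bump_nonneg)
  ultimately show ?thesis by simp
next
  case False
  then obtain c where c: "c \<in> Basis" "x \<bullet> c \<le> a \<bullet> c \<or> x \<bullet> c \<ge> b \<bullet> c"
    by (auto simp: mem_box not_less)
  then have "box_bump n a b x = 0"
    unfolding box_bump_def tensor_prod_def by (intro prod_zero) (auto intro!: bexI interval_bump_outside)
  then show ?thesis by simp
qed

lemma tensor_test_box_bump:
  "tensor_test (\<lambda>c. interval_bump n (a \<bullet> c) (b \<bullet> c)) (norm a + norm b + 1)"
  unfolding tensor_test_def
proof (intro ballI conjI allI impI)
  fix c :: 'a and y :: real assume c: "c \<in> Basis" and y: "norm a + norm b + 1 \<le> \<bar>y\<bar>"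
  have "\<bar>a \<bullet> c\<bar> \<le> norm a" "\<bar>b \<bullet> c\<bar> \<le> norm b" using Basis_le_norm[OF c] by auto
  then show "interval_bump n (a \<bullet> c) (b \<bullet> c) y = 0" using y by (intro interval_bump_outside) linarith
qed (rule smooth_real_interval_bump)

lemma integral_indicator_box_eq_0_if_orthogonal_tensor_tests:
  fixes v :: "'a::euclidean_space \<Rightarrow> real"
  assumes v: "L2 v"
    and orth: "\<And>g R. tensor_test g R \<Longrightarrow> (\<integral>x. v x * tensor_prod g x \<partial>lebesgue) = 0"
  shows "(\<integral>x. v x * indicator (box a b) x \<partial>lebesgue) = 0"
proof -
  have "(\<lambda>n. \<integral>x. v x * box_bump n a b x \<partial>lebesgue) \<longlonglongrightarrow> (\<integral>x. v x * indicator (box a b) x \<partial>lebesgue)"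
  proof (rule integral_dominated_convergence[where w="\<lambda>x. \<bar>v x * indicator (cbox a b) x\<bar>"])
    show "(\<lambda>x. v x * indicator (box a b) x) \<in> borel_measurable lebesgue"
      using L2_measurable[OF v] by (intro borel_measurable_times borel_measurable_indicator) auto
    show "(\<lambda>x. v x * box_bump n a b x) \<in> borel_measurable lebesgue" for n
      using L2_measurable[OF v] continuous_imp_lebesgue_measurable[OF
          test_fun_continuous[OF test_fun_tensor_prod[OF tensor_test_box_bump]]]
      unfolding box_bump_def by (rule borel_measurable_times)
    show "integrable lebesgue (\<lambda>x. \<bar>v x * indicator (cbox a b) x\<bar>)"
      by (intro integrable_abs integrable_L2_mult v L2_indicator lmeasurable_cbox)
    show "AE x in lebesgue. (\<lambda>n. v x * box_bump n a b x) \<longlonglongrightarrow> v x * indicator (box a b) x"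
      by (intro AE_I2 tendsto_mult tendsto_const box_bump_tendsto_indicator)
    show "AE x in lebesgue. norm (v x * box_bump n a b x) \<le> \<bar>v x * indicator (cbox a b) x\<bar>" for n
      using mult_left_mono[OF abs_box_bump_le_indicator abs_ge_zero]
      by (intro AE_I2) (simp add: abs_mult)
  qed
  moreover have "(\<integral>x. v x * box_bump n a b x \<partial>lebesgue) = 0" for n
    unfolding box_bump_def by (rule orth[OF tensor_test_box_bump])
  ultimately show ?thesis using LIMSEQ_unique[OF tendsto_const] by fastforce
qed

lemma emeasure_density_max_0:
  fixes g :: "'a::euclidean_space \<Rightarrow> real"
  assumes [measurable]: "g \<in> borel_measurable lborel" and g: "integrable lborel g"
    and [measurable]: "X \<in> sets borel"
  shows "emeasure (density lborel (\<lambda>x. ennreal (max 0 (g x)))) X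
         = ennreal (\<integral>x. max 0 (g x) * indicator X x \<partial>lborel)"
proof -
  have "integrable lborel (\<lambda>x. max 0 (g x) * indicator X x)"
    by (rule Bochner_Integration.integrable_bound[OF g]) (auto split: split_indicator)
  then have "(\<integral>\<^sup>+x. ennreal (max 0 (g x) * indicator X x) \<partial>lborel)
      = ennreal (\<integral>x. max 0 (g x) * indicator X x \<partial>lborel)"
    by (rule nn_integral_eq_integral) auto
  moreover have "(\<integral>\<^sup>+x. ennreal (max 0 (g x)) * indicator X x \<partial>lborel)
      = (\<integral>\<^sup>+x. ennreal (max 0 (g x) * indicator X x) \<partial>lborel)"
    by (rule nn_integral_cong) (auto split: split_indicator)
  ultimately show ?thesis by (simp add: emeasure_density)
qed

lemma Int_stable_boxes: "Int_stable (range (\<lambda>(a, b). box a b :: 'a::euclidean_space set))"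
  unfolding Int_stable_def
proof (intro ballI)
  fix X Y assume "X \<in> range (\<lambda>(a, b). box a b :: 'a set)" "Y \<in> range (\<lambda>(a, b). box a b :: 'a set)"
  then obtain a b c d :: 'a where XY: "X = box a b" "Y = box c d" by auto
  have "X \<inter> Y = box (\<Sum>i\<in>Basis. max (a\<bullet>i) (c\<bullet>i) *\<^sub>R i) (\<Sum>i\<in>Basis. min (b\<bullet>i) (d\<bullet>i) *\<^sub>R i)"
    unfolding XY by (rule box_Int_box)
  then show "X \<inter> Y \<in> range (\<lambda>(a, b). box a b)" by auto
qed

lemma Union_centered_boxes: "(\<Union>n::nat. box (- real n *\<^sub>R One) (real n *\<^sub>R One)) = (UNIV :: 'a::euclidean_space set)"
proof (intro set_eqI iffI)
  fix x :: 'a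
  obtain n :: nat where n: "norm x + 1 \<le> real n" using real_arch_simple by blast
  have "x \<in> box (- real n *\<^sub>R One) (real n *\<^sub>R One)"
    unfolding mem_box using Basis_le_norm[of _ x] n by (force simp: abs_le_iff)
  then show "x \<in> (\<Union>n::nat. box (- real n *\<^sub>R One) (real n *\<^sub>R One))" by blast
qed simp

text \<open>The positive and negative parts of g define measures agreeing on all boxes, hence equal.\<close>
lemma AE_zero_if_box_integrals_zero_lborel:
  fixes g :: "'a::euclidean_space \<Rightarrow> real"
  assumes [measurable]: "g \<in> borel_measurable lborel" and g: "integrable lborel g"
    and box: "\<And>a b. (\<integral>x. g x * indicator (box a b) x \<partial>lborel) = 0"
  shows "AE x in lborel. g x = 0"
proof -
  let ?E = "range (\<lambda>(a, b). box a b :: 'a set)"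
  let ?M = "\<lambda>h. density lborel (\<lambda>x. ennreal (max 0 (h x)))"
  have g': "integrable lborel (\<lambda>x. - g x)" using g by simp
  have parts_agree: "emeasure (?M g) X = emeasure (?M (\<lambda>x. - g x)) X" if "X \<in> ?E" for X
  proof -
    obtain a b where X: "X = box a b" using \<open>X \<in> ?E\<close> by auto
    have [measurable]: "X \<in> sets borel" unfolding X by simp
    have "(\<integral>x. max 0 (g x) * indicator X x \<partial>lborel) - (\<integral>x. max 0 (- g x) * indicator X x \<partial>lborel)
        = (\<integral>x. g x * indicator X x \<partial>lborel)"
      by (subst Bochner_Integration.integral_diff[symmetric])
        (auto intro!: Bochner_Integration.integrable_bound[OF g] Bochner_Integration.integral_cong
          AE_I2 split: split_indicator)
    then show ?thesis
      using box[of a b] emeasure_density_max_0[OF _ g] emeasure_density_max_0[OF _ g'] by (simp add: X)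
  qed
  have sets_boxes: "sets lborel = sigma_sets UNIV ?E"
    by (simp add: borel_eq_box sets_measure_of)
  have "?M g = ?M (\<lambda>x. - g x)"
  proof (rule measure_eqI_generator_eq[where E="?E" and \<Omega>=UNIV
        and A="\<lambda>n. box (- real n *\<^sub>R One) (real n *\<^sub>R One)"])
    show "emeasure (?M g) (box (- real n *\<^sub>R One) (real n *\<^sub>R One)) \<noteq> \<infinity>" for n
      using emeasure_density_max_0[OF _ g, of "box (- real n *\<^sub>R One) (real n *\<^sub>R One)"] by simp
  qed (use Int_stable_boxes parts_agree sets_boxes Union_centered_boxes in auto)
  then have "AE x in lborel. ennreal (max 0 (g x)) = ennreal (max 0 (- g x))"
    by (intro sigma_finite_measure.density_unique[OF sigma_finite_lborel]) auto
  then show ?thesis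
    by (rule eventually_mono) (auto simp: max_def split: if_splits)
qed

lemma AE_zero_if_box_integrals_zero_integrable:
  fixes w :: "'a::euclidean_space \<Rightarrow> real"
  assumes w: "integrable lebesgue w"
    and box: "\<And>a b. (\<integral>x. w x * indicator (box a b) x \<partial>lebesgue) = 0"
  shows "AE x in lebesgue. w x = 0"
proof -
  obtain g where g: "g \<in> borel_measurable lborel" and wg: "AE x in lborel. w x = g x"
    using completion_ex_borel_measurable_real[OF borel_measurable_integrable[OF w]] by blast
  have wg': "AE x in lebesgue. w x = g x" by (rule AE_completion[OF wg])
  have g_int: "integrable lborel g"
    using integrable_cong_AE_imp[OF w measurable_completion[OF g] wg'] integrable_completion[OF g]
    by simp
  have "(\<integral>x. g x * indicator (box a b) x \<partial>lborel) = 0" for a b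
  proof -
    have m: "(\<lambda>x. g x * indicator (box a b) x) \<in> borel_measurable lborel"
      using g by (intro borel_measurable_times) auto
    have "(\<integral>x. g x * indicator (box a b) x \<partial>lborel) = (\<integral>x. g x * indicator (box a b) x \<partial>lebesgue)"
      by (rule integral_completion[OF m, symmetric])
    also have "\<dots> = (\<integral>x. w x * indicator (box a b) x \<partial>lebesgue)"
    proof (rule integral_cong_AE)
      show "(\<lambda>x. w x * indicator (box a b) x) \<in> borel_measurable lebesgue"
        using borel_measurable_integrable[OF w] fmeasurableD[OF lmeasurable_box]
      by (intro borel_measurable_times borel_measurable_indicator)
    qed (use measurable_completion[OF m] wg' in \<open>auto elim: eventually_mono\<close>)
    finally show ?thesis using box by simp
  qed
  then have "AE x in lborel. g x = 0" by (rule AE_zero_if_box_integrals_zero_lborel[OF g g_int])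
  then show ?thesis using AE_completion wg' by (fastforce elim: eventually_mono)
qed

lemma AE_zero_if_box_integrals_zero:
  fixes v :: "'a::euclidean_space \<Rightarrow> real"
  assumes v: "v \<in> borel_measurable lebesgue"
    and local_int: "\<And>a b. integrable lebesgue (\<lambda>x. v x * indicator (cbox a b) x)"
    and box: "\<And>a b. (\<integral>x. v x * indicator (box a b) x \<partial>lebesgue) = 0"
  shows "AE x in lebesgue. v x = 0"
proof -
  have "AE x in lebesgue. v x * indicator (box (- real n *\<^sub>R One) (real n *\<^sub>R One)) x = 0"
    for n :: nat
  proof (rule AE_zero_if_box_integrals_zero_integrable)
    let ?C = "box (- real n *\<^sub>R One) (real n *\<^sub>R One :: 'a)"
    have "integrable lebesgue (\<lambda>x. indicator ?C x *\<^sub>R (v x * indicator (cbox (- real n *\<^sub>R One) (real n *\<^sub>R One)) x))"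
      by (rule integrable_mult_indicator[OF _ local_int]) simp
    moreover have "indicator ?C x *\<^sub>R (v x * indicator (cbox (- real n *\<^sub>R One) (real n *\<^sub>R One)) x)
        = v x * indicator ?C x" for x
      using box_subset_cbox[of "- real n *\<^sub>R One" "real n *\<^sub>R One :: 'a"]
      by (auto split: split_indicator)
    ultimately show "integrable lebesgue (\<lambda>x. v x * indicator ?C x)" by (simp only:)
    fix a b :: 'a
    have "v x * indicator ?C x * indicator (box a b) x = v x * indicator (?C \<inter> box a b) x" for x
      by (simp split: split_indicator)
    moreover have "?C \<inter> box a b = box (\<Sum>i\<in>Basis. max ((- real n *\<^sub>R One) \<bullet> i) (a \<bullet> i) *\<^sub>R i)
        (\<Sum>i\<in>Basis. min ((real n *\<^sub>R One) \<bullet> i) (b \<bullet> i) *\<^sub>R i)"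
      by (rule box_Int_box)
    ultimately show "(\<integral>x. v x * indicator ?C x * indicator (box a b) x \<partial>lebesgue) = 0"
      by (simp only: box)
  qed
  then have "AE x in lebesgue. \<forall>n::nat. v x * indicator (box (- real n *\<^sub>R One) (real n *\<^sub>R One)) x = 0"
    unfolding AE_all_countable by blast
  then show ?thesis
  proof (rule eventually_mono)
    fix x assume x: "\<forall>n::nat. v x * indicator (box (- real n *\<^sub>R One) (real n *\<^sub>R One)) x = 0"
    have "x \<in> (\<Union>n::nat. box (- real n *\<^sub>R One) (real n *\<^sub>R One))"
      by (simp only: Union_centered_boxes UNIV_I)
    then obtain n :: nat where "x \<in> box (- real n *\<^sub>R One) (real n *\<^sub>R One)" by blast
    then show "v x = 0" using x[rule_format, of n] by simp
  qed
qed

lemma AE_zero_if_orthogonal_tensor_tests: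
  fixes v :: "'a::euclidean_space \<Rightarrow> real"
  assumes v: "L2 v"
    and orth: "\<And>g R. tensor_test g R \<Longrightarrow> (\<integral>x. v x * tensor_prod g x \<partial>lebesgue) = 0"
  shows "AE x in lebesgue. v x = 0"
  by (rule AE_zero_if_box_integrals_zero)
    (use v in \<open>auto intro: L2_measurable integrable_L2_mult L2_indicator
      integral_indicator_box_eq_0_if_orthogonal_tensor_tests[OF v orth]\<close>)

section \<open>Weak gradients\<close>

lemma weak_grad:
  assumes "H1 u" "b \<in> Basis"
  shows "L2 (weak_grad u b)" "weak_partial u b (weak_grad u b)"
proof -
  have "\<exists>g. L2 g \<and> weak_partial u b g" using assms unfolding H1_def by blast
  then have "L2 (weak_grad u b) \<and> weak_partial u b (weak_grad u b)"
    unfolding weak_grad_def by (rule someI_ex)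
  then show "L2 (weak_grad u b)" "weak_partial u b (weak_grad u b)" by auto
qed

lemma weak_partial_unique_AE:
  fixes u :: "'a::euclidean_space \<Rightarrow> real"
  assumes g1: "L2 g1" and g2: "L2 g2" and w1: "weak_partial u b g1" and w2: "weak_partial u b g2"
  shows "AE x in lebesgue. g1 x = g2 x"
proof -
  have "AE x in lebesgue. g1 x - g2 x = 0"
  proof (rule AE_zero_if_orthogonal_tensor_tests[OF L2_diff[OF g1 g2]])
    fix g :: "'a \<Rightarrow> real \<Rightarrow> real" and R :: real
    assume "tensor_test g R"
    then have t: "test_fun (tensor_prod g)" by (rule test_fun_tensor_prod)
    have "(\<integral>x. (g1 x - g2 x) * tensor_prod g x \<partial>lebesgue)
        = (\<integral>x. g1 x * tensor_prod g x \<partial>lebesgue) - (\<integral>x. g2 x * tensor_prod g x \<partial>lebesgue)"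
      unfolding left_diff_distrib
      by (intro Bochner_Integration.integral_diff integrable_L2_mult g1 g2 test_fun_L2 t)
    also have "\<dots> = 0"
      using w1 w2 t unfolding weak_partial_def by (metis minus_equation_iff diff_self)
    finally show "(\<integral>x. (g1 x - g2 x) * tensor_prod g x \<partial>lebesgue) = 0" .
  qed
  then show ?thesis by (rule eventually_mono) simp
qed

lemma grad_sq_nonneg: "0 \<le> grad_sq u x"
  unfolding grad_sq_def by (intro sum_nonneg) auto

lemma integrable_grad_sq:
  assumes "H1 u"
  shows "integrable lebesgue (grad_sq u)"
  unfolding grad_sq_def[abs_def]
  using weak_grad(1)[OF assms] by (intro Bochner_Integration.integrable_sum L2_integrable_power2)

lemma weak_partial_dilate:
  fixes u :: "'a::euclidean_space \<Rightarrow> real"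
  assumes u: "L2 u" and g: "L2 g" and w: "weak_partial u b g" and s: "s \<noteq> 0"
  shows "weak_partial (\<lambda>x. u (s *\<^sub>R x)) b (\<lambda>x. s * g (s *\<^sub>R x))"
  unfolding weak_partial_def
proof (intro allI impI)
  fix \<phi> :: "'a \<Rightarrow> real" assume t: "test_fun \<phi>"
  define \<phi>' where "\<phi>' = (\<lambda>y. \<phi> ((1/s) *\<^sub>R y))"
  have t': "test_fun \<phi>'" unfolding \<phi>'_def by (rule test_fun_dilate[OF t]) (use s in simp)
  have \<phi>: "\<phi> x = \<phi>' (s *\<^sub>R x)" for x unfolding \<phi>'_def using s by simp
  have D\<phi>: "frechet_derivative \<phi> (at x) b = s * frechet_derivative \<phi>' (at (s *\<^sub>R x)) b" for x
    using frechet_derivative_dilate[OF t, of "1/s" "s *\<^sub>R x" b] s by (simp add: \<phi>'_def)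
  define H where "H = (\<lambda>y. s * (u y * frechet_derivative \<phi>' (at y) b))"
  define K where "K = (\<lambda>y. s * (g y * \<phi>' y))"
  have H: "H \<in> borel_measurable lebesgue" unfolding H_def
    using L2_measurable[OF u] continuous_imp_lebesgue_measurable[OF test_fun_frechet_derivative_continuous[OF t']]
    by measurable
  have K: "K \<in> borel_measurable lebesgue" unfolding K_def
    using L2_measurable[OF g] continuous_imp_lebesgue_measurable[OF test_fun_continuous[OF t']]
    by measurable
  have "(\<integral>x. u (s *\<^sub>R x) * frechet_derivative \<phi> (at x) b \<partial>lebesgue) = (\<integral>x. H (s *\<^sub>R x) \<partial>lebesgue)"
    unfolding H_def D\<phi> by (simp add: algebra_simps)
  also have "\<dots> = s * (\<integral>y. u y * frechet_derivative \<phi>' (at y) b \<partial>lebesgue) / \<bar>s\<bar> ^ DIM('a)"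
    unfolding lebesgue_integral_dilate(2)[OF H s] by (simp add: H_def)
  also have "\<dots> = - (\<integral>x. K x \<partial>lebesgue) / \<bar>s\<bar> ^ DIM('a)"
    using w t' unfolding weak_partial_def by (simp add: K_def)
  also have "\<dots> = - (\<integral>x. K (s *\<^sub>R x) \<partial>lebesgue)"
    using lebesgue_integral_dilate(2)[OF K s] s by simp
  also have "\<dots> = - (\<integral>x. s * g (s *\<^sub>R x) * \<phi> x \<partial>lebesgue)"
    unfolding K_def \<phi> by (simp add: algebra_simps)
  finally show "(\<integral>x. u (s *\<^sub>R x) * frechet_derivative \<phi> (at x) b \<partial>lebesgue)
      = - (\<integral>x. s * g (s *\<^sub>R x) * \<phi> x \<partial>lebesgue)" .
qed

lemma H1_dilate:
  fixes u :: "'a::euclidean_space \<Rightarrow> real"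
  assumes u: "H1 u" and s: "s \<noteq> 0"
  shows "H1 (\<lambda>x. u (s *\<^sub>R x))"
proof -
  have uL: "L2 u" using u unfolding H1_def by blast
  have "L2 (\<lambda>x. s * weak_grad u b (s *\<^sub>R x)) \<and> weak_partial (\<lambda>x. u (s *\<^sub>R x)) b (\<lambda>x. s * weak_grad u b (s *\<^sub>R x))"
    if b: "b \<in> Basis" for b
    using weak_partial_dilate[OF uL weak_grad[OF u b] s] L2_cmult L2_dilate(1)[OF weak_grad(1)[OF u b] s]
    by blast
  then show ?thesis unfolding H1_def using L2_dilate(1)[OF uL s] by blast
qed

lemma grad_sq_dilate_AE:
  fixes u :: "'a::euclidean_space \<Rightarrow> real"
  assumes u: "H1 u" and s: "s \<noteq> 0"
  shows "AE x in lebesgue. grad_sq (\<lambda>x. u (s *\<^sub>R x)) x = s\<^sup>2 * grad_sq u (s *\<^sub>R x)"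
proof -
  have uL: "L2 u" using u unfolding H1_def by blast
  have us: "H1 (\<lambda>x. u (s *\<^sub>R x))" by (rule H1_dilate[OF u s])
  have "AE x in lebesgue. weak_grad (\<lambda>x. u (s *\<^sub>R x)) b x = s * weak_grad u b (s *\<^sub>R x)"
    if b: "b \<in> Basis" for b
    using weak_grad[OF us b] L2_cmult[OF L2_dilate(1)[OF weak_grad(1)[OF u b] s]]
      weak_partial_dilate[OF uL weak_grad[OF u b] s]
    by (intro weak_partial_unique_AE) auto
  then have "AE x in lebesgue. \<forall>b\<in>Basis. weak_grad (\<lambda>x. u (s *\<^sub>R x)) b x = s * weak_grad u b (s *\<^sub>R x)"
    by (rule eventually_ball_finite[OF finite_Basis, rule_format])
  then show ?thesis
    by (rule eventually_mono)
      (simp add: grad_sq_def sum_distrib_left power_mult_distrib cong: sum.cong)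
qed

section \<open>Functions with a vanishing weak derivative\<close>

lemma tensor_test_mono: "tensor_test g R \<Longrightarrow> R \<le> R' \<Longrightarrow> tensor_test g R'"
  unfolding tensor_test_def by force

lemma tensor_test_shift:
  assumes g: "tensor_test g R" and b: "b \<in> Basis" and t: "t \<ge> 0"
  shows "tensor_test (g(b := (\<lambda>y. g b (y - t)))) (R + t)"
  unfolding tensor_test_def
proof (intro ballI conjI allI impI)
  fix c :: 'a assume c: "c \<in> Basis"
  have "smooth_real (\<lambda>y. g b (1 * y + - t))" by (rule smooth_real_affine[OF tensor_testD(1)[OF g b]])
  then show "smooth_real ((g(b := (\<lambda>y. g b (y - t)))) c)" using tensor_testD(1)[OF g c] by simp
  fix y assume "R + t \<le> \<bar>y\<bar>"
  then have "R \<le> \<bar>y - t\<bar>" "R \<le> \<bar>y\<bar>" using t by auto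
  then show "(g(b := (\<lambda>y. g b (y - t)))) c y = 0" using tensor_testD(2)[OF g] b c by auto
qed

text \<open>The difference of the two tensor products is \<open>\<partial>\<^sub>b\<close> of a tensor test function, namely
  g with its b-th factor replaced by a primitive of \<open>g\<^sub>b - g\<^sub>b(\<cdot> - h)\<close>.\<close>
lemma integral_tensor_prod_shift_eq:
  fixes u :: "'a::euclidean_space \<Rightarrow> real"
  assumes u: "L2 u" and b: "b \<in> Basis"
    and partial_zero: "\<And>\<phi>. test_fun \<phi> \<Longrightarrow> (\<integral>x. u x * frechet_derivative \<phi> (at x) b \<partial>lebesgue) = 0"
    and g: "tensor_test g R" and R: "R \<ge> 0" and h: "h > 0"
  shows "(\<integral>x. u x * tensor_prod (g(b := (\<lambda>y. g b (y - h)))) x \<partial>lebesgue)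
    = (\<integral>x. u x * tensor_prod g x \<partial>lebesgue)"
proof -
  obtain \<Psi> where \<Psi>: "smooth_real \<Psi>" "\<And>y. deriv \<Psi> y = g b y - g b (y - h)"
    "\<And>y. R + h \<le> \<bar>y\<bar> \<Longrightarrow> \<Psi> y = 0"
    using smooth_real_primitive_of_shift_difference[OF tensor_testD(1)[OF g b] R
        tensor_testD(2)[OF g b] h] by blast
  let ?G = "g(b := \<Psi>)" and ?g' = "g(b := (\<lambda>y. g b (y - h)))"
  have G: "tensor_test ?G (R + h)"
    using \<Psi>(1,3) tensor_test_mono[OF g, of "R + h"] h unfolding tensor_test_def by auto
  have g': "tensor_test ?g' (R + h)" by (rule tensor_test_shift[OF g b]) (use h in simp)
  have D: "frechet_derivative (tensor_prod ?G) (at x) b = tensor_prod g x - tensor_prod ?g' x" for x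
  proof -
    have "frechet_derivative (tensor_prod ?G) (at x) b
        = deriv \<Psi> (x \<bullet> b) * (\<Prod>j\<in>Basis - {b}. ?G j (x \<bullet> j))"
      using frechet_derivative_tensor_prod_Basis[of ?G b x, OF tensor_testD(1)[OF G] b] by simp
    also have "(\<Prod>j\<in>Basis - {b}. ?G j (x \<bullet> j)) = (\<Prod>j\<in>Basis - {b}. g j (x \<bullet> j))"
      by (rule prod.cong) auto
    finally show ?thesis
      using tensor_prod_remove[OF b, of g x] tensor_prod_fun_upd[OF b, of g "\<lambda>y. g b (y - h)" x] \<Psi>(2)
      by (simp add: algebra_simps fun_upd_def)
  qed
  have "0 = (\<integral>x. u x * frechet_derivative (tensor_prod ?G) (at x) b \<partial>lebesgue)"
    using partial_zero[OF test_fun_tensor_prod[OF G]] by simp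
  also have "\<dots> = (\<integral>x. u x * tensor_prod g x - u x * tensor_prod ?g' x \<partial>lebesgue)"
    unfolding D right_diff_distrib ..
  also have "\<dots> = (\<integral>x. u x * tensor_prod g x \<partial>lebesgue) - (\<integral>x. u x * tensor_prod ?g' x \<partial>lebesgue)"
    by (intro Bochner_Integration.integral_diff integrable_L2_mult u test_fun_L2
        test_fun_tensor_prod[OF g] test_fun_tensor_prod[OF g'])
  finally show ?thesis by simp
qed

lemma integral_tensor_prod_shift_multiple_eq:
  fixes u :: "'a::euclidean_space \<Rightarrow> real"
  assumes u: "L2 u" and b: "b \<in> Basis"
    and partial_zero: "\<And>\<phi>. test_fun \<phi> \<Longrightarrow> (\<integral>x. u x * frechet_derivative \<phi> (at x) b \<partial>lebesgue) = 0"
    and g: "tensor_test g R" and R: "R \<ge> 0" and h: "h > 0"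
  shows "(\<integral>x. u x * tensor_prod (g(b := (\<lambda>y. g b (y - real k * h)))) x \<partial>lebesgue)
    = (\<integral>x. u x * tensor_prod g x \<partial>lebesgue)"
proof (induction k)
  case 0
  then show ?case by simp
next
  case (Suc k)
  let ?gk = "g(b := (\<lambda>y. g b (y - real k * h)))"
  have kh: "real k * h \<ge> 0" using h by simp
  have "g(b := (\<lambda>y. g b (y - real (Suc k) * h))) = ?gk(b := (\<lambda>y. ?gk b (y - h)))"
    by (simp add: fun_eq_iff algebra_simps)
  then have "(\<integral>x. u x * tensor_prod (g(b := (\<lambda>y. g b (y - real (Suc k) * h)))) x \<partial>lebesgue)
      = (\<integral>x. u x * tensor_prod (?gk(b := (\<lambda>y. ?gk b (y - h)))) x \<partial>lebesgue)"
    by (simp only:)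
  also have "\<dots> = (\<integral>x. u x * tensor_prod ?gk x \<partial>lebesgue)"
    by (rule integral_tensor_prod_shift_eq[OF u b partial_zero tensor_test_shift[OF g b kh]
          add_nonneg_nonneg[OF R kh] h])
  also have "\<dots> = (\<integral>x. u x * tensor_prod g x \<partial>lebesgue)" by (rule Suc.IH)
  finally show ?case .
qed

lemma power2_sum_pairwise_orthogonal:
  fixes a :: "nat \<Rightarrow> real"
  assumes "finite I" "\<And>j k. j \<in> I \<Longrightarrow> k \<in> I \<Longrightarrow> j \<noteq> k \<Longrightarrow> a j * a k = 0"
  shows "(\<Sum>k\<in>I. a k)\<^sup>2 = (\<Sum>k\<in>I. (a k)\<^sup>2)"
proof -
  have "(\<Sum>k\<in>I. a j * a k) = (a j)\<^sup>2" if j: "j \<in> I" for j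
  proof -
    have "(\<Sum>k\<in>I. a j * a k) = a j * a j + (\<Sum>k\<in>I - {j}. a j * a k)"
      using j assms(1) by (subst sum.remove[of _ j]) auto
    also have "(\<Sum>k\<in>I - {j}. a j * a k) = 0"
      by (rule sum.neutral) (use assms(2) j in auto)
    finally show ?thesis by (simp add: power2_eq_square)
  qed
  then show ?thesis by (simp add: power2_eq_square sum_product)
qed

lemma abs_mult_le_weighted_squares:
  fixes a b e :: real
  assumes e: "e > 0"
  shows "\<bar>a * b\<bar> \<le> (e * a\<^sup>2 + b\<^sup>2 / e) / 2"
proof -
  have "2 * e * (\<bar>a\<bar> * \<bar>b\<bar>) \<le> e\<^sup>2 * a\<^sup>2 + b\<^sup>2"
    using sum_squares_bound[of "e * \<bar>a\<bar>" "\<bar>b\<bar>"] by (simp add: power_mult_distrib mult_ac)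
  then show ?thesis using e by (simp add: field_simps power2_eq_square abs_mult)
qed

lemma L2_pairing_eq_0_if_orthogonal_family:
  fixes u :: "'a::euclidean_space \<Rightarrow> real" and \<phi> :: "nat \<Rightarrow> 'a \<Rightarrow> real"
  assumes u: "L2 u" and \<phi>: "\<And>k. L2 (\<phi> k)"
    and orthogonal: "\<And>j k x. j \<noteq> k \<Longrightarrow> \<phi> j x * \<phi> k x = 0"
    and norm: "\<And>k. (\<integral>x. (\<phi> k x)\<^sup>2 \<partial>lebesgue) = P"
    and pairing: "\<And>k. (\<integral>x. u x * \<phi> k x \<partial>lebesgue) = c"
  shows "c = 0"
proof (rule ccontr)
  assume "c \<noteq> 0"
  define U where "U = (\<integral>x. (u x)\<^sup>2 \<partial>lebesgue)"
  obtain n :: nat where n: "((U + P) / 2 / \<bar>c\<bar>)\<^sup>2 < real n"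
    using reals_Archimedean2 by blast
  have n_pos: "n > 0" using le_less_trans[OF zero_le_power2 n] by simp
  define S where "S = (\<lambda>x. \<Sum>k<n. \<phi> k x)"
  define e where "e = sqrt (real n)"
  have e: "e > 0" "e * e = real n" using n_pos by (auto simp: e_def)
  have S2: "(S x)\<^sup>2 = (\<Sum>k<n. (\<phi> k x)\<^sup>2)" for x
    unfolding S_def by (rule power2_sum_pairwise_orthogonal) (use orthogonal in auto)
  have int_uS: "integrable lebesgue (\<lambda>x. u x * S x)"
    unfolding S_def sum_distrib_left by (intro Bochner_Integration.integrable_sum integrable_L2_mult u \<phi>)
  have int_S2: "integrable lebesgue (\<lambda>x. (S x)\<^sup>2)"
    unfolding S2 by (intro Bochner_Integration.integrable_sum L2_integrable_power2 \<phi>)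
  have int_u2: "integrable lebesgue (\<lambda>x. (u x)\<^sup>2)" by (rule L2_integrable_power2[OF u])
  have "(\<integral>x. u x * S x \<partial>lebesgue) = (\<Sum>k<n. \<integral>x. u x * \<phi> k x \<partial>lebesgue)"
    unfolding S_def sum_distrib_left by (intro Bochner_Integration.integral_sum integrable_L2_mult u \<phi>)
  then have "real n * \<bar>c\<bar> = \<bar>\<integral>x. u x * S x \<partial>lebesgue\<bar>"
    using pairing by (simp add: abs_mult)
  also have "\<dots> \<le> (\<integral>x. (e * (u x)\<^sup>2 + (S x)\<^sup>2 / e) / 2 \<partial>lebesgue)"
  proof -
    have "integrable lebesgue (\<lambda>x. (e * (u x)\<^sup>2 + (S x)\<^sup>2 / e) / 2)"
      by (intro integrable_divide Bochner_Integration.integrable_add integrable_mult_right int_S2 int_u2)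
    from Bochner_Integration.integral_norm_bound_integral[OF int_uS this]
    show ?thesis using abs_mult_le_weighted_squares[OF e(1)] by simp
  qed
  also have "\<dots> = (e * U + (\<integral>x. (S x)\<^sup>2 \<partial>lebesgue) / e) / 2"
    using int_S2 int_u2 by (simp add: U_def)
  also have "(\<integral>x. (S x)\<^sup>2 \<partial>lebesgue) = real n * P"
    unfolding S2 using norm by (subst Bochner_Integration.integral_sum) (auto intro: L2_integrable_power2 \<phi>)
  also have "(e * U + real n * P / e) / 2 = e * ((U + P) / 2)"
    using e(1) by (simp add: field_simps flip: e(2))
  finally have "e * e * \<bar>c\<bar> \<le> e * ((U + P) / 2)" unfolding e(2) .
  then have "e * \<bar>c\<bar> \<le> (U + P) / 2" using e(1) by (simp add: mult.assoc)
  then have "e \<le> (U + P) / 2 / \<bar>c\<bar>" using \<open>c \<noteq> 0\<close> by (simp add: field_simps)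
  then have "e\<^sup>2 \<le> ((U + P) / 2 / \<bar>c\<bar>)\<^sup>2"
    using e(1) by (intro power_mono) auto
  then have "e * e \<le> ((U + P) / 2 / \<bar>c\<bar>)\<^sup>2" by (simp only: power2_eq_square)
  then show False using n e(2) by simp
qed

lemma tensor_prod_shift:
  assumes b: "b \<in> Basis"
  shows "tensor_prod (g(b := (\<lambda>y. g b (y - t)))) x = tensor_prod g (x - t *\<^sub>R b)"
proof -
  have "(\<Prod>c\<in>Basis - {b}. g c ((x - t *\<^sub>R b) \<bullet> c)) = (\<Prod>c\<in>Basis - {b}. g c (x \<bullet> c))"
    by (rule prod.cong) (use b in \<open>auto simp: inner_diff_left inner_Basis\<close>)
  moreover have "(x - t *\<^sub>R b) \<bullet> b = x \<bullet> b - t"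
    using b by (simp add: inner_diff_left inner_Basis)
  ultimately show ?thesis
    unfolding tensor_prod_fun_upd[OF b] tensor_prod_remove[OF b, of g "x - t *\<^sub>R b"] by simp
qed

lemma AE_zero_if_weak_partial_zero:
  fixes u :: "'a::euclidean_space \<Rightarrow> real"
  assumes u: "L2 u" and b: "b \<in> Basis"
    and partial_zero: "\<And>\<phi>. test_fun \<phi> \<Longrightarrow> (\<integral>x. u x * frechet_derivative \<phi> (at x) b \<partial>lebesgue) = 0"
  shows "AE x in lebesgue. u x = 0"
proof (rule AE_zero_if_orthogonal_tensor_tests[OF u])
  fix g :: "'a \<Rightarrow> real \<Rightarrow> real" and R :: real
  assume "tensor_test g R"
  define R0 where "R0 = max R 0"
  have R0: "R0 \<ge> 0" by (simp add: R0_def)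
  have g: "tensor_test g R0" by (rule tensor_test_mono[OF \<open>tensor_test g R\<close>]) (simp add: R0_def)
  define h where "h = 2 * R0 + 1"
  have h: "h > 0" using R0 by (simp add: h_def)
  define \<phi> where "\<phi> k = tensor_prod (g(b := (\<lambda>y. g b (y - real k * h))))" for k :: nat
  have kh: "real k * h \<ge> 0" for k :: nat using h by simp
  have \<phi>_L2: "L2 (\<phi> k)" for k
    unfolding \<phi>_def by (rule test_fun_L2[OF test_fun_tensor_prod[OF tensor_test_shift[OF g b kh]]])
  have orthogonal: "\<phi> j x * \<phi> k x = 0" if "j \<noteq> k" for j k x
  proof (rule ccontr)
    assume "\<phi> j x * \<phi> k x \<noteq> 0"
    then have "g b (x \<bullet> b - real j * h) \<noteq> 0" "g b (x \<bullet> b - real k * h) \<noteq> 0"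
      unfolding \<phi>_def tensor_prod_fun_upd[OF b] by auto
    then have "\<bar>x \<bullet> b - real j * h\<bar> < R0" "\<bar>x \<bullet> b - real k * h\<bar> < R0"
      using tensor_testD(2)[OF g b] by (meson not_le)+
    then have "\<bar>real j * h - real k * h\<bar> < 2 * R0" by linarith
    moreover have "\<bar>real j * h - real k * h\<bar> = \<bar>real j - real k\<bar> * h"
      using h by (simp add: left_diff_distrib[symmetric] abs_mult)
    moreover have "h \<le> \<bar>real j - real k\<bar> * h"
      using h \<open>j \<noteq> k\<close> by (simp add: mult_le_cancel_right1)
    ultimately show False unfolding h_def by linarith
  qed
  have norm: "(\<integral>x. (\<phi> k x)\<^sup>2 \<partial>lebesgue) = (\<integral>x. (tensor_prod g x)\<^sup>2 \<partial>lebesgue)" for k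
    using lebesgue_integral_translate[of "\<lambda>x. (tensor_prod g x)\<^sup>2" "- (real k * h) *\<^sub>R b"]
      L2_measurable[OF test_fun_L2[OF test_fun_tensor_prod[OF g]]]
    by (simp add: \<phi>_def tensor_prod_shift[OF b] borel_measurable_power)
  have pairing: "(\<integral>x. u x * \<phi> k x \<partial>lebesgue) = (\<integral>x. u x * tensor_prod g x \<partial>lebesgue)" for k
    unfolding \<phi>_def
    by (rule integral_tensor_prod_shift_multiple_eq[OF u b partial_zero g R0 h])
  show "(\<integral>x. u x * tensor_prod g x \<partial>lebesgue) = 0"
    by (rule L2_pairing_eq_0_if_orthogonal_family[OF u \<phi>_L2 orthogonal norm pairing])
qed

lemma integral_grad_sq_pos:
  fixes u :: "'a::euclidean_space \<Rightarrow> real"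
  assumes u: "H1 u" and nonzero: "L2_norm_sq u \<noteq> 0"
  shows "(\<integral>x. grad_sq u x \<partial>lebesgue) > 0"
proof (rule ccontr)
  assume "\<not> (\<integral>x. grad_sq u x \<partial>lebesgue) > 0"
  moreover have "(\<integral>x. grad_sq u x \<partial>lebesgue) \<ge> 0"
    by (intro integral_nonneg_AE AE_I2 grad_sq_nonneg)
  ultimately have "(\<integral>x. grad_sq u x \<partial>lebesgue) = 0" by simp
  then have grad_zero: "AE x in lebesgue. grad_sq u x = 0"
    using integral_nonneg_eq_0_iff_AE[OF integrable_grad_sq[OF u] AE_I2[OF grad_sq_nonneg]] by simp
  have uL: "L2 u" using u unfolding H1_def by blast
  obtain b :: 'a where b: "b \<in> Basis" using nonempty_Basis by blast
  have "AE x in lebesgue. weak_grad u b x = 0"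
    using grad_zero
  proof (rule eventually_mono)
    fix x assume "grad_sq u x = 0"
    moreover have "(weak_grad u b x)\<^sup>2 \<le> grad_sq u x"
      unfolding grad_sq_def by (rule member_le_sum[OF b]) auto
    ultimately show "weak_grad u b x = 0" by simp
  qed
  then have "(\<integral>x. weak_grad u b x * \<phi> x \<partial>lebesgue) = 0" for \<phi> :: "'a \<Rightarrow> real"
    by (intro integral_eq_zero_AE) (auto elim: eventually_mono)
  then have "(\<integral>x. u x * frechet_derivative \<phi> (at x) b \<partial>lebesgue) = 0" if "test_fun \<phi>" for \<phi>
    using weak_grad(2)[OF u b] that unfolding weak_partial_def by simp
  then have "AE x in lebesgue. u x = 0" by (rule AE_zero_if_weak_partial_zero[OF uL b])
  then have "L2_norm_sq u = 0"
    unfolding L2_norm_sq_def by (intro integral_eq_zero_AE) (auto elim: eventually_mono)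
  then show False using nonzero by simp
qed

section \<open>Dilation of the energy and strict subadditivity\<close>

definition is_minimizer :: "(real \<Rightarrow> real) \<Rightarrow> real \<Rightarrow> ('a::euclidean_space \<Rightarrow> real) \<Rightarrow> bool" where
  "is_minimizer F m u \<longleftrightarrow> u \<in> mass_set m \<and> (\<forall>v\<in>mass_set m. J F u \<le> J F (v :: 'a \<Rightarrow> real))"

lemma Imin_eq_J_minimizer:
  fixes u :: "'a::euclidean_space \<Rightarrow> real" and N :: "'a itself"
  assumes "is_minimizer F m u"
  shows "Imin F m N = J F u"
  unfolding Imin_def by (rule cInf_eq_minimum) (use assms in \<open>auto simp: is_minimizer_def\<close>)

lemma Imin_le_J:
  fixes u v :: "'a::euclidean_space \<Rightarrow> real" and N :: "'a itself"
  assumes "is_minimizer F m u" "v \<in> mass_set m"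
  shows "Imin F m N \<le> J F v"
  using assms Imin_eq_J_minimizer[OF assms(1)] by (simp add: is_minimizer_def)

lemma J_split:
  fixes u :: "'a::euclidean_space \<Rightarrow> real"
  assumes u: "H1 u" and F: "integrable lebesgue (\<lambda>x. F (u x))"
  shows "J F u = (1/2) * (\<integral>x. grad_sq u x \<partial>lebesgue) + (\<integral>x. F (u x) \<partial>lebesgue)"
  unfolding J_def using integrable_grad_sq[OF u] F by simp

lemma J_dilate:
  fixes u :: "'a::euclidean_space \<Rightarrow> real" and F :: "real \<Rightarrow> real"
  assumes u: "H1 u" and s: "s \<noteq> 0" and contF: "continuous_on UNIV F"
    and F_int: "\<And>v::'a \<Rightarrow> real. H1 v \<Longrightarrow> integrable lebesgue (\<lambda>x. F (v x))"
  shows "J F (\<lambda>x. u (s *\<^sub>R x)) = (s\<^sup>2 * ((1/2) * (\<integral>x. grad_sq u x \<partial>lebesgue))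
      + (\<integral>x. F (u x) \<partial>lebesgue)) / \<bar>s\<bar> ^ DIM('a)"
proof -
  have us: "H1 (\<lambda>x. u (s *\<^sub>R x))" by (rule H1_dilate[OF u s])
  have uL: "L2 u" using u by (simp add: H1_def)
  have Fu: "(\<lambda>x. F (u x)) \<in> borel_measurable lebesgue"
    using measurable_compose[OF L2_measurable[OF uL] borel_measurable_continuous_onI[OF contF]]
    by (simp add: o_def)
  have grad: "grad_sq u \<in> borel_measurable lebesgue"
    by (rule borel_measurable_integrable[OF integrable_grad_sq[OF u]])
  have "(\<integral>x. grad_sq (\<lambda>x. u (s *\<^sub>R x)) x \<partial>lebesgue) = (\<integral>x. s\<^sup>2 * grad_sq u (s *\<^sub>R x) \<partial>lebesgue)"
  proof (rule integral_cong_AE)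
    show "grad_sq (\<lambda>x. u (s *\<^sub>R x)) \<in> borel_measurable lebesgue"
      by (rule borel_measurable_integrable[OF integrable_grad_sq[OF us]])
    show "(\<lambda>x. s\<^sup>2 * grad_sq u (s *\<^sub>R x)) \<in> borel_measurable lebesgue"
      by (intro borel_measurable_times borel_measurable_const measurable_dilate grad)
  qed (rule grad_sq_dilate_AE[OF u s])
  also have "\<dots> = s\<^sup>2 * ((\<integral>x. grad_sq u x \<partial>lebesgue) / \<bar>s\<bar> ^ DIM('a))"
    using lebesgue_integral_dilate(2)[OF grad s] by simp
  finally show ?thesis
    unfolding J_split[OF us F_int[OF us]] lebesgue_integral_dilate(2)[OF Fu s]
    using s by (simp add: field_simps)
qed

lemma Imin_scale_mass:
  fixes F :: "real \<Rightarrow> real" and N :: "'a::euclidean_space itself"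
  assumes contF: "continuous_on UNIV F"
    and F_int: "\<And>u::'a \<Rightarrow> real. H1 u \<Longrightarrow> integrable lebesgue (\<lambda>x. F (u x))"
    and attained: "\<And>m. m > 0 \<Longrightarrow> \<exists>u::'a \<Rightarrow> real. is_minimizer F m u"
    and m: "m > 0" and t: "t \<ge> 1"
  shows "Imin F (t * m) N \<le> t * Imin F m N" and "t > 1 \<Longrightarrow> Imin F (t * m) N < t * Imin F m N"
proof -
  obtain u :: "'a \<Rightarrow> real" where u: "is_minimizer F m u" using attained[OF m] by blast
  have uH: "H1 u" and um: "L2_norm_sq u = m" using u by (auto simp: is_minimizer_def mass_set_def)
  define s where "s = root DIM('a) (inverse t)"
  have s: "s > 0" "\<bar>s\<bar> ^ DIM('a) = inverse t" using t by (auto simp: s_def)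
  define v where "v = (\<lambda>x. u (s *\<^sub>R x))"
  have "v \<in> mass_set (t * m)"
    using H1_dilate[OF uH] L2_dilate(2)[of u s] uH um s t
    by (auto simp: mass_set_def v_def H1_def field_simps)
  then have Iv: "Imin F (t * m) N \<le> J F v"
    using Imin_le_J attained t m by (meson mult_pos_pos zero_less_one less_le_trans)
  define G where "G = (1/2) * (\<integral>x. grad_sq u x \<partial>lebesgue)"
  define P where "P = (\<integral>x. F (u x) \<partial>lebesgue)"
  have Iu: "Imin F m N = G + P"
    unfolding Imin_eq_J_minimizer[OF u] G_def P_def by (rule J_split[OF uH F_int[OF uH]])
  have "J F v = (s\<^sup>2 * G + P) / \<bar>s\<bar> ^ DIM('a)"
    unfolding v_def G_def P_def by (rule J_dilate[OF uH _ contF F_int]) (use s in simp)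
  then have Jv: "J F v = t * (s\<^sup>2 * G + P)" using s(2) t by (simp add: divide_inverse)
  have G: "G > 0" unfolding G_def using integral_grad_sq_pos[OF uH] um m by simp
  have "s \<le> 1" using t by (simp add: s_def inverse_le_1_iff)
  then have "s\<^sup>2 * G \<le> G" using s G by (simp add: power_le_one mult_le_cancel_right1)
  then show "Imin F (t * m) N \<le> t * Imin F m N"
    using Iv t unfolding Jv Iu by (smt (verit) mult_left_mono)
  assume "t > 1"
  then have "s < 1" by (simp add: s_def inverse_less_1_iff)
  then have "s\<^sup>2 * G < G" using s G by (simp add: power_less_one_iff mult_less_cancel_right1)
  then show "Imin F (t * m) N < t * Imin F m N"
    using Iv \<open>t > 1\<close> unfolding Jv Iu by (smt (verit) mult_strict_left_mono)
qed

lemma Imin_strict_subadditive: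
  fixes F :: "real \<Rightarrow> real" and N :: "'a::euclidean_space itself"
  assumes contF: "continuous_on UNIV F"
    and F_int: "\<And>u::'a \<Rightarrow> real. H1 u \<Longrightarrow> integrable lebesgue (\<lambda>x. F (u x))"
    and attained: "\<And>m. m > 0 \<Longrightarrow> \<exists>u::'a \<Rightarrow> real. is_minimizer F m u"
    and a: "a > 0" and b: "b > 0"
  shows "Imin F (a + b) N < Imin F a N + Imin F b N"
proof -
  have less_if_le: "Imin F (x + y) N < Imin F x N + Imin F y N"
    if x: "x > 0" and y: "y > 0" and le: "x \<le> y" for x y :: real
  proof -
    have "1 \<le> y / x" using x le by simp
    then have "Imin F (y / x * x) N \<le> y / x * Imin F x N"
      using Imin_scale_mass(1)[OF contF F_int attained x, of "y / x" N] by blast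
    then have x_part: "x / y * Imin F y N \<le> Imin F x N"
      using x y by (simp add: field_simps)
    have "1 < (x + y) / y" using x y by simp
    then have "Imin F ((x + y) / y * y) N < (x + y) / y * Imin F y N"
      using Imin_scale_mass(2)[OF contF F_int attained y, of "(x + y) / y" N] by simp
    moreover have "(x + y) / y * y = x + y" using y by simp
    ultimately have "Imin F (x + y) N < (x + y) / y * Imin F y N" by simp
    also have "\<dots> = Imin F y N + x / y * Imin F y N" using y by (simp add: field_simps)
    finally show ?thesis using x_part by simp
  qed
  show ?thesis
    using less_if_le[OF a b] less_if_le[OF b a] by (cases "a \<le> b") (simp_all add: add.commute)
qed

theorem proposition3:
  fixes F :: "real \<Rightarrow> real"
    and N :: "'a::euclidean_space itself"
  assumes contF: "continuous_on UNIV F"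
    and evenF: "\<And>s. F (- s) = F s"
    and J_defined: "\<And>u::'a \<Rightarrow> real. H1 u \<Longrightarrow> integrable lebesgue (\<lambda>x. F (u x))"
    and min_attained: "\<And>\<rho>. \<rho> > 0 \<Longrightarrow>
           \<exists>u::'a \<Rightarrow> real. u \<in> mass_set (\<rho>\<^sup>2) \<and> (\<forall>v::'a \<Rightarrow> real \<in> mass_set (\<rho>\<^sup>2). J F u \<le> J F v)"
    and rho: "\<rho> > 0"
    and mu: "0 < \<mu>" "\<mu> < \<rho>"
  shows "Imin F (\<rho>\<^sup>2) N < Imin F (\<mu>\<^sup>2) N + Imin F (\<rho>\<^sup>2 - \<mu>\<^sup>2) N"
proof -
  have attained: "\<exists>u::'a \<Rightarrow> real. is_minimizer F m u" if "m > 0" for m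
    using min_attained[of "sqrt m"] that by (simp add: is_minimizer_def)
  have "\<mu>\<^sup>2 > 0" "\<rho>\<^sup>2 - \<mu>\<^sup>2 > 0" using mu by (simp_all add: power_strict_mono)
  from Imin_strict_subadditive[OF contF J_defined attained this]
  show ?thesis by simp
qed

end
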